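(* Let $H$ be a real Hilbert space, $C\subset H$ nonempty closed convex with metric projection $P$, and $A,F:H\to H$ satisfying: (A1) $A$ is $\lambda$-strongly monotone and $L_A$-Lipschitz continuous, $F$ is $L_F$-Lipschitz continuous, and $A,F$ are sequentially weak-to-weak continuous; (A2) the couple $(A,F)$ is monotone; (A3) $\mathrm{Sol}(A,F,C)\ne\emptyset$ and $\mathcal C:=A(\mathrm{Sol}(A,F,C))$ is convex. Assume moreover that $A$ is linear and self-adjoint. Let $\alpha:[0,\infty)\to(0,\infty)$ be continuously differentiable and $\mu:[0,\infty)\to(0,\infty)$ continuous with $$\lim_{t\to\infty}\alpha(t)=0,\quad \lim_{t\to\infty}\alpha(t)\mu(t)=\infty,\quad \lim_{t\to\infty}\frac{\dot\alpha(t)}{\alpha^2(t)}=0,\quad \int_0^\infty\alpha(t)\,dt=\infty.$$ Let $x(t)$ be a strong global solution of $\dot x(t)=P\big(F_{\alpha(t)}x(t)-\mu(t)Ax(t)\big)-F_{\alpha(t)}x(t)$, $x(0)=x_0\in H$, where $F_\alpha:=F+\alpha I$. Then $\|x(t)-x^\dagger\|\to0$ as $t\to\infty$, where $x^\dagger:=A^{-1}u^\dagger$ and $u^\dagger$ is the unique solution of the problem: find $u\in\mathcal C$ with $\langle A^{-1}u,v-u\rangle\ge0$ for all $v\in\mathcal C$.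
   Context: $\mathrm{Sol}(A,F,C)$ is the solution set of $\mathrm{GVI}(A,F,C)$: find $x^*\in H$ with $Fx^*\in C$ and $\langle Ax^*,y-Fx^*\rangle\ge0$ for all $y\in C$. The couple $(A,F)$ is monotone if $\langle Ax-Ay,Fx-Fy\rangle\ge0$ for all $x,y$. Sequentially weak-to-weak continuous: $x^k\rightharpoonup\bar x$ implies $Ax^k\rightharpoonup A\bar x$. A strong global solution is a function $x:[0,\infty)\to H$ absolutely continuous on every $[0,T]$, satisfying the equation for almost every $t\ge0$ and the initial condition. ($u^\dagger$ exists uniquely since $A^{-1}$ is Lipschitz and strongly monotone and $\mathcal C$ is closed convex; $x^\dagger\in\mathrm{Sol}(A,F,C)$.) *)

theory Defs
  imports "HOL-Analysis.Analysis"
begin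

definition weak_conv :: "(nat \<Rightarrow> 'a::real_inner) \<Rightarrow> 'a \<Rightarrow> bool" where
  "weak_conv xs x \<longleftrightarrow> (\<forall>y. ((\<lambda>k. xs k \<bullet> y) \<longlongrightarrow> x \<bullet> y) sequentially)"

definition seq_weak_weak_cont :: "('a::real_inner \<Rightarrow> 'a) \<Rightarrow> bool" where
  "seq_weak_weak_cont A \<longleftrightarrow> (\<forall>xs x. weak_conv xs x \<longrightarrow> weak_conv (\<lambda>k. A (xs k)) (A x))"

text \<open>Metric projection onto a set (the nearest point; unique for nonempty closed convex sets in Hilbert space).\<close>
definition metric_proj :: "'a::real_inner set \<Rightarrow> 'a \<Rightarrow> 'a" where
  "metric_proj C x = (THE p. p \<in> C \<and> (\<forall>y\<in>C. norm (x - p) \<le> norm (x - y)))"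

definition strongly_monotone :: "real \<Rightarrow> ('a::real_inner \<Rightarrow> 'a) \<Rightarrow> bool" where
  "strongly_monotone lam A \<longleftrightarrow> (\<forall>x y. (A x - A y) \<bullet> (x - y) \<ge> lam * (norm (x - y))\<^sup>2)"

definition monotone_couple :: "('a::real_inner \<Rightarrow> 'a) \<Rightarrow> ('a \<Rightarrow> 'a) \<Rightarrow> bool" where
  "monotone_couple A F \<longleftrightarrow> (\<forall>x y. (A x - A y) \<bullet> (F x - F y) \<ge> 0)"

definition Sol :: "('a::real_inner \<Rightarrow> 'a) \<Rightarrow> ('a \<Rightarrow> 'a) \<Rightarrow> 'a set \<Rightarrow> 'a set" where
  "Sol A F C = {x. F x \<in> C \<and> (\<forall>y\<in>C. A x \<bullet> (y - F x) \<ge> 0)}"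

definition abs_cont_on :: "real \<Rightarrow> real \<Rightarrow> (real \<Rightarrow> 'a::real_normed_vector) \<Rightarrow> bool" where
  "abs_cont_on a b f \<longleftrightarrow>
     (\<forall>\<epsilon>>0. \<exists>\<delta>>0. \<forall>(n::nat) (u::nat \<Rightarrow> real) v.
        (\<forall>i<n. a \<le> u i \<and> u i \<le> v i \<and> v i \<le> b) \<and>
        (\<forall>i<n. \<forall>j<n. i \<noteq> j \<longrightarrow> v i \<le> u j \<or> v j \<le> u i) \<and>
        (\<Sum>i<n. v i - u i) < \<delta>
        \<longrightarrow> (\<Sum>i<n. norm (f (v i) - f (u i))) < \<epsilon>)"

definition strong_global_solution ::
    "(real \<Rightarrow> 'a::real_normed_vector \<Rightarrow> 'a) \<Rightarrow> 'a \<Rightarrow> (real \<Rightarrow> 'a) \<Rightarrow> bool" where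
  "strong_global_solution G x0 x \<longleftrightarrow>
     (\<forall>T\<ge>0. abs_cont_on 0 T x) \<and>
     (AE t in lborel. t \<ge> 0 \<longrightarrow> (x has_vector_derivative G t (x t)) (at t)) \<and>
     x 0 = x0"

end

theory Submission
  imports Defs
begin

(*
  For a > 0 the regularized problem GVI(A, F + a I, C) has a solution z(a): in the variable
  u = A z it is a variational inequality for a strongly monotone Lipschitz map, solved by a
  contracting projected step. Monotonicity of the couple (A, F) makes a \<mapsto> z(a) Lipschitz with
  constant O(1/a) and makes the energy <A z(a), z(a)> increase as a decreases, bounded by that
  of x\<dagger>; hence z(a) converges, its limit solves GVI(A, F, C), and the variational inequality
  defining u\<dagger> forces the limit to be x\<dagger>.

  Along the trajectory, V(t) = <A e(t), e(t)> with e(t) = x(t) - z(\<alpha>(t)) is absolutely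
  continuous. Off a null set its upper right Dini derivative is at most -\<kappa> \<alpha>(t) (V(t) - \<epsilon>)
  for large t: firm nonexpansiveness of the projection yields the dissipation, \<alpha> \<mu> \<rightarrow> \<infinity>
  absorbs the Lipschitz constant of F, and \<alpha>'/\<alpha>\<^sup>2 \<rightarrow> 0 makes the drift of z(\<alpha>(t)) small.
  As absolutely continuous functions map null sets to null sets, the differential inequality
  integrates: (V - \<epsilon>) exp(\<kappa> \<integral>\<alpha>) is nonincreasing, and \<integral>\<alpha> = \<infinity> gives V \<le> 2 \<epsilon>
  eventually. So e(t) \<rightarrow> 0 and x(t) \<rightarrow> x\<dagger>.
*)

section \<open>Projection onto closed convex sets\<close>

lemma parallelogram_midpoint:
  fixes x a b :: "'a::real_inner"
  shows "(norm (a - b))\<^sup>2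
    = 2 * (norm (x - a))\<^sup>2 + 2 * (norm (x - b))\<^sup>2 - 4 * (norm (x - (1/2) *\<^sub>R (a + b)))\<^sup>2"
  unfolding power2_norm_eq_inner by (simp add: algebra_simps inner_commute)

lemma minimizing_sequence_Cauchy:
  fixes C :: "'a::real_inner set"
  assumes "convex C" and s: "\<And>n. s n \<in> C"
    and d: "\<And>y. y \<in> C \<Longrightarrow> d \<le> norm (x - y)" "0 \<le> d"
    and approx: "\<And>n. (norm (x - s n))\<^sup>2 \<le> d\<^sup>2 + 1 / Suc n"
  shows "Cauchy s"
proof (rule CauchyI)
  have mid: "(norm (s n - s m))\<^sup>2 \<le> 2 / Suc n + 2 / Suc m" for n m
  proof -
    have "(1/2) *\<^sub>R (s n + s m) \<in> C"
      using convexD[OF assms(1) s s, of "1/2" "1/2"] by (simp add: scaleR_add_right)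
    then have "d\<^sup>2 \<le> (norm (x - (1/2) *\<^sub>R (s n + s m)))\<^sup>2"
      using d by (intro power_mono) auto
    then show ?thesis
      using parallelogram_midpoint[of "s n" "s m" x] approx[of n] approx[of m] by linarith
  qed
  fix e :: real assume e: "e > 0"
  obtain N :: nat where N: "4 / e\<^sup>2 < N"
    using reals_Archimedean2 by blast
  then have "4 / e\<^sup>2 < Suc N"
    by linarith
  then have N2: "4 / Suc N < e\<^sup>2"
    using e by (simp add: field_simps)
  show "\<exists>M. \<forall>m\<ge>M. \<forall>n\<ge>M. norm (s m - s n) < e"
  proof (intro exI allI impI)
    fix m n assume "N \<le> m" "N \<le> n"
    then have "2 / Suc m \<le> 2 / Suc N" "2 / Suc n \<le> 2 / Suc N"
      by (auto intro!: divide_left_mono)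
    then have "(norm (s m - s n))\<^sup>2 < e\<^sup>2"
      using mid[of m n] N2 by linarith
    then show "norm (s m - s n) < e"
      using e by (simp add: power2_less_imp_less)
  qed
qed

lemma nearest_point_exists:
  fixes C :: "'a::{real_inner,complete_space} set"
  assumes "C \<noteq> {}" "closed C" "convex C"
  shows "\<exists>p\<in>C. \<forall>y\<in>C. norm (x - p) \<le> norm (x - y)"
proof -
  define d where "d = (INF y\<in>C. norm (x - y))"
  have bdd: "bdd_below ((\<lambda>y. norm (x - y)) ` C)"
    by (rule bdd_belowI[of _ 0]) auto
  have d_le: "d \<le> norm (x - y)" if "y \<in> C" for y
    unfolding d_def using bdd that by (simp add: cInf_lower)
  have d0: "d \<ge> 0"
    unfolding d_def using assms(1) by (intro cINF_greatest) auto
  have "\<exists>y\<in>C. norm (x - y) < sqrt (d\<^sup>2 + 1 / Suc n)" for n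
  proof -
    have "d < sqrt (d\<^sup>2 + 1 / Suc n)"
      using d0 by (intro real_less_rsqrt) simp
    then show ?thesis
      unfolding d_def using assms(1) by (subst (asm) cInf_less_iff) (auto simp: bdd)
  qed
  then obtain s where s: "\<And>n. s n \<in> C" "\<And>n. norm (x - s n) < sqrt (d\<^sup>2 + 1 / Suc n)"
    by metis
  have approx: "(norm (x - s n))\<^sup>2 \<le> d\<^sup>2 + 1 / Suc n" for n
    using power_mono[OF less_imp_le[OF s(2)[of n]], of 2] by simp
  have "Cauchy s"
    by (rule minimizing_sequence_Cauchy[of C s d x, OF assms(3) s(1) d_le d0 approx])
  then obtain p where p: "s \<longlonglongrightarrow> p"
    using Cauchy_convergent_iff convergent_def by blast
  have "p \<in> C"
    using closed_sequentially[OF assms(2)] s(1) p by blast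
  have "(\<lambda>n. norm (x - s n)) \<longlonglongrightarrow> norm (x - p)"
    by (intro tendsto_intros p)
  moreover have "(\<lambda>n. sqrt (d\<^sup>2 + 1 / Suc n)) \<longlonglongrightarrow> sqrt (d\<^sup>2 + 0)"
    by (intro tendsto_intros LIMSEQ_inverse_real_of_nat[unfolded inverse_eq_divide])
  ultimately have "norm (x - p) \<le> sqrt (d\<^sup>2 + 0)"
    using s(2) by (intro LIMSEQ_le) (auto intro: less_imp_le)
  then have "norm (x - p) \<le> d"
    using d0 by simp
  then show ?thesis
    using \<open>p \<in> C\<close> d_le by force
qed

lemma nearest_point_variational:
  fixes C :: "'a::real_inner set"
  assumes "convex C" "p \<in> C" "\<forall>y\<in>C. norm (x - p) \<le> norm (x - y)" "y \<in> C"
  shows "(x - p) \<bullet> (y - p) \<le> 0"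
proof (rule ccontr)
  define k where "k = (x - p) \<bullet> (y - p)"
  define n where "n = (norm (y - p))\<^sup>2"
  assume "\<not> ?thesis"
  then have k: "k > 0" and "y \<noteq> p"
    by (auto simp: k_def)
  then have n: "n > 0"
    by (simp add: n_def)
  \<comment> \<open>move from \<open>p\<close> towards \<open>y\<close> by a step \<open>s\<close> small enough that the distance to \<open>x\<close> drops\<close>
  define s where "s = min 1 (k / n)"
  have "s \<le> k / n"
    by (simp add: s_def)
  then have "s * n \<le> k"
    using n by (simp add: pos_le_divide_eq)
  moreover have "0 < s" "s \<le> 1"
    using k n by (simp_all add: s_def)
  ultimately have s: "0 < s" "s \<le> 1" "s * n \<le> k"
    by simp_all
  have "s *\<^sub>R y + (1 - s) *\<^sub>R p \<in> C"
    using s by (intro convexD[OF assms(1) assms(4) assms(2)]) auto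
  moreover have "s *\<^sub>R y + (1 - s) *\<^sub>R p = p + s *\<^sub>R (y - p)"
    by (simp add: algebra_simps)
  ultimately have "(norm (x - p))\<^sup>2 \<le> (norm (x - (p + s *\<^sub>R (y - p))))\<^sup>2"
    using assms(3) by (intro power_mono) auto
  also have "\<dots> = (norm (x - p))\<^sup>2 - 2 * s * k + s * (s * n)"
    unfolding power2_norm_eq_inner k_def n_def
    by (simp add: algebra_simps inner_commute power2_eq_square)
  finally show False
    using mult_left_mono[OF s(3), of s] s k by (simp add: mult_pos_pos)
qed

lemma variational_point_unique:
  fixes C :: "'a::real_inner set"
  assumes "p \<in> C" "q \<in> C"
    and "\<forall>y\<in>C. (x - p) \<bullet> (y - p) \<le> 0" "\<forall>y\<in>C. (x - q) \<bullet> (y - q) \<le> 0"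
  shows "p = q"
proof -
  have "(x - p) \<bullet> (q - p) \<le> 0" "(x - q) \<bullet> (p - q) \<le> 0"
    using assms by auto
  then have "(p - q) \<bullet> (p - q) \<le> 0"
    by (simp add: algebra_simps inner_commute)
  then show ?thesis
    by (metis inner_gt_zero_iff not_less right_minus_eq)
qed

locale closed_convex_set =
  fixes C :: "'a::{real_inner,complete_space} set"
  assumes C_nonempty: "C \<noteq> {}" and C_closed: "closed C" and C_convex: "convex C"
begin

lemma metric_proj_nearest_variational:
  "metric_proj C x \<in> C \<and> (\<forall>y\<in>C. (x - metric_proj C x) \<bullet> (y - metric_proj C x) \<le> 0)"
proof -
  obtain p where p: "p \<in> C" "\<forall>y\<in>C. norm (x - p) \<le> norm (x - y)"
    using nearest_point_exists[OF C_nonempty C_closed C_convex] by blast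
  have vi: "\<forall>y\<in>C. (x - p) \<bullet> (y - p) \<le> 0"
    using nearest_point_variational[OF C_convex p] by blast
  have "metric_proj C x = p"
    unfolding metric_proj_def
  proof (rule the_equality)
    fix q assume q: "q \<in> C \<and> (\<forall>y\<in>C. norm (x - q) \<le> norm (x - y))"
    then show "q = p"
      using nearest_point_variational[OF C_convex] variational_point_unique[OF _ p(1) _ vi] by blast
  qed (use p in blast)
  then show ?thesis
    using p vi by simp
qed

lemma metric_proj_in: "metric_proj C x \<in> C"
  using metric_proj_nearest_variational by blast

lemma metric_proj_variational: "y \<in> C \<Longrightarrow> (x - metric_proj C x) \<bullet> (y - metric_proj C x) \<le> 0"
  using metric_proj_nearest_variational by blast

lemma metric_proj_eqI:
  assumes "p \<in> C" "\<forall>y\<in>C. (x - p) \<bullet> (y - p) \<le> 0"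
  shows "metric_proj C x = p"
  using variational_point_unique[OF metric_proj_in assms(1) _ assms(2)]
    metric_proj_nearest_variational by blast

lemma metric_proj_firmly_nonexpansive:
  "(norm (metric_proj C x - metric_proj C y))\<^sup>2 \<le> (x - y) \<bullet> (metric_proj C x - metric_proj C y)"
proof -
  let ?p = "metric_proj C x" and ?q = "metric_proj C y"
  have "(x - ?p) \<bullet> (?q - ?p) \<le> 0" "(y - ?q) \<bullet> (?p - ?q) \<le> 0"
    using metric_proj_variational metric_proj_in by auto
  then show ?thesis
    unfolding power2_norm_eq_inner by (simp add: algebra_simps inner_commute)
qed

lemma metric_proj_nonexpansive: "dist (metric_proj C x) (metric_proj C y) \<le> dist x y"
proof -
  let ?d = "norm (metric_proj C x - metric_proj C y)"
  have "?d * ?d \<le> norm (x - y) * ?d"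
    using metric_proj_firmly_nonexpansive[of x y, unfolded power2_eq_square]
      norm_cauchy_schwarz[of "x - y" "metric_proj C x - metric_proj C y"]
    by linarith
  then show ?thesis
    by (cases "?d = 0") (auto simp: dist_norm mult_le_cancel_right)
qed

end

section \<open>Strongly monotone Lipschitz operators\<close>

lemma closed_convex_set_UNIV: "closed_convex_set UNIV"
  by unfold_locales auto

lemma strongly_monotone_imp_inj:
  assumes "m > 0" "strongly_monotone m g"
  shows "inj g"
proof (rule injI)
  fix u v assume "g u = g v"
  then have "m * (norm (u - v))\<^sup>2 \<le> 0"
    using assms(2)[unfolded strongly_monotone_def, rule_format, of u v] by simp
  then show "u = v"
    using assms(1) by (simp add: mult_le_0_iff)
qed

lemma strongly_monotone_step_contraction:
  fixes g :: "'a::real_inner \<Rightarrow> 'a"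
  assumes m: "m > 0" and sm: "strongly_monotone m g" and lip: "Lg-lipschitz_on UNIV g"
  obtains \<rho> k where "\<rho> > 0" "0 \<le> k" "k < 1"
    "\<And>x y. dist (x - \<rho> *\<^sub>R g x) (y - \<rho> *\<^sub>R g y) \<le> k * dist x y"
proof -
  define L where "L = max Lg m"
  define \<rho> where "\<rho> = m / L\<^sup>2"
  define q where "q = 1 - m\<^sup>2 / L\<^sup>2"
  have L: "m \<le> L" "L > 0"
    using m by (auto simp: L_def)
  have \<rho>: "\<rho> > 0"
    using m L by (simp add: \<rho>_def)
  have q: "0 \<le> q" "q < 1"
    using m L power_mono[OF L(1)] by (auto simp: q_def field_simps)
  have sq: "(dist (x - \<rho> *\<^sub>R g x) (y - \<rho> *\<^sub>R g y))\<^sup>2 \<le> q * (dist x y)\<^sup>2" for x y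
  proof -
    define d where "d = x - y"
    define h where "h = g x - g y"
    have hd: "h \<bullet> d \<ge> m * (norm d)\<^sup>2"
      using sm by (simp add: strongly_monotone_def h_def d_def)
    have "norm h \<le> Lg * norm d"
      using lipschitz_on_normD[OF lip] by (simp add: h_def d_def)
    also have "\<dots> \<le> L * norm d"
      by (intro mult_right_mono) (auto simp: L_def)
    finally have "(norm h)\<^sup>2 \<le> L\<^sup>2 * (norm d)\<^sup>2"
      by (metis norm_ge_zero power_mono power_mult_distrib)
    moreover have "(norm (d - \<rho> *\<^sub>R h))\<^sup>2 = (norm d)\<^sup>2 - 2 * \<rho> * (h \<bullet> d) + \<rho>\<^sup>2 * (norm h)\<^sup>2"
      unfolding power2_norm_eq_inner
      by (simp add: inner_diff_left inner_diff_right inner_commute power2_eq_square algebra_simps)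
    ultimately have "(norm (d - \<rho> *\<^sub>R h))\<^sup>2
        \<le> (norm d)\<^sup>2 - 2 * \<rho> * (m * (norm d)\<^sup>2) + \<rho>\<^sup>2 * (L\<^sup>2 * (norm d)\<^sup>2)"
      using \<rho> hd by (auto intro!: add_mono diff_mono mult_left_mono)
    also have "\<dots> = q * (norm d)\<^sup>2"
      using L by (simp add: \<rho>_def q_def field_simps power2_eq_square)
    finally show ?thesis
      by (simp add: dist_norm d_def h_def algebra_simps)
  qed
  show thesis
  proof
    show "dist (x - \<rho> *\<^sub>R g x) (y - \<rho> *\<^sub>R g y) \<le> sqrt q * dist x y" for x y
      using real_sqrt_le_mono[OF sq[of x y]] by (simp add: real_sqrt_mult)
  qed (use \<rho> q in auto)
qed

lemma (in closed_convex_set) strongly_monotone_variational_inequality: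
  fixes K :: "'a \<Rightarrow> 'a"
  assumes "m > 0" "strongly_monotone m K" "LK-lipschitz_on UNIV K"
  shows "\<exists>w\<in>C. \<forall>y\<in>C. K w \<bullet> (y - w) \<ge> 0"
proof -
  obtain \<rho> k where \<rho>: "\<rho> > 0" and k: "0 \<le> k" "k < 1"
    and contr: "\<And>x y. dist (x - \<rho> *\<^sub>R K x) (y - \<rho> *\<^sub>R K y) \<le> k * dist x y"
    using strongly_monotone_step_contraction[OF assms] by blast
  \<comment> \<open>a fixed point of the projected gradient step solves the variational inequality\<close>
  have "\<exists>!w. metric_proj C (w - \<rho> *\<^sub>R K w) = w"
  proof (rule banach_fix_type[OF k], intro allI)
    fix x y
    show "dist (metric_proj C (x - \<rho> *\<^sub>R K x)) (metric_proj C (y - \<rho> *\<^sub>R K y)) \<le> k * dist x y"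
      using metric_proj_nonexpansive contr by (rule order_trans)
  qed
  then obtain w where w: "metric_proj C (w - \<rho> *\<^sub>R K w) = w"
    by blast
  have "K w \<bullet> (y - w) \<ge> 0" if "y \<in> C" for y
  proof -
    have "\<rho> * (K w \<bullet> (y - w)) \<ge> 0"
      using metric_proj_variational[OF that, of "w - \<rho> *\<^sub>R K w"] w by simp
    then show ?thesis
      using \<rho> by (simp add: zero_le_mult_iff)
  qed
  then show ?thesis
    using metric_proj_in[of "w - \<rho> *\<^sub>R K w"] w by auto
qed

lemma strongly_monotone_lipschitz_surj:
  fixes g :: "'a::{real_inner,complete_space} \<Rightarrow> 'a"
  assumes "m > 0" "strongly_monotone m g" "Lg-lipschitz_on UNIV g"
  shows "surj g"
proof -
  have "\<exists>u. g u = f" for f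
  proof -
    have sm: "strongly_monotone m (\<lambda>x. g x - f)"
      using assms(2) by (simp add: strongly_monotone_def)
    have lip: "Lg-lipschitz_on UNIV (\<lambda>x. g x - f)"
      using lipschitz_on_add[OF assms(3) lipschitz_on_constant[of _ "- f"]] by simp
    obtain u where "\<forall>y. (g u - f) \<bullet> (y - u) \<ge> 0"
      using closed_convex_set.strongly_monotone_variational_inequality[OF
          closed_convex_set_UNIV assms(1) sm lip]
      by auto
    then have "(g u - f) \<bullet> ((u - (g u - f)) - u) \<ge> 0"
      by (rule spec)
    moreover have "(g u - f) \<bullet> ((u - (g u - f)) - u) = - ((g u - f) \<bullet> (g u - f))"
      by (simp add: inner_diff_right)
    ultimately have "(norm (g u - f))\<^sup>2 \<le> 0"
      by (simp add: power2_norm_eq_inner)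
    then show ?thesis
      by auto
  qed
  then show ?thesis
    by (metis surj_def)
qed

lemma strongly_monotone_right_inverse_lipschitz:
  assumes m: "m > 0" and sm: "strongly_monotone m G" and GK: "\<And>w. G (K w) = w"
  shows "(1 / m)-lipschitz_on UNIV K"
proof (rule lipschitz_onI)
  fix w w'
  let ?n = "norm (K w - K w')"
  have "m * ?n\<^sup>2 \<le> (w - w') \<bullet> (K w - K w')"
    using sm[unfolded strongly_monotone_def, rule_format, of "K w" "K w'"] unfolding GK .
  then have "(m * ?n) * ?n \<le> norm (w - w') * ?n"
    using norm_cauchy_schwarz[of "w - w'" "K w - K w'"] by (simp add: power2_eq_square mult.assoc)
  then have "m * ?n \<le> norm (w - w')"
    by (cases "?n = 0") (auto dest: mult_right_le_imp_le)
  then show "dist (K w) (K w') \<le> 1 / m * dist w w'"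
    using m by (simp add: dist_norm field_simps)
qed (use m in simp)

lemma strongly_monotone_right_inverse_strongly_monotone:
  assumes m: "m > 0" and sm: "strongly_monotone m G" and lip: "LG-lipschitz_on UNIV G"
    and GK: "\<And>w. G (K w) = w"
  shows "strongly_monotone (m / (max LG m)\<^sup>2) K"
  unfolding strongly_monotone_def
proof (intro allI)
  fix w w'
  define L where "L = max LG m"
  have L: "L > 0"
    using m by (simp add: L_def)
  have "norm (G (K w) - G (K w')) \<le> LG * norm (K w - K w')"
    by (rule lipschitz_on_normD[OF lip]) auto
  also have "\<dots> \<le> L * norm (K w - K w')"
    by (intro mult_right_mono) (auto simp: L_def)
  finally have "norm (w - w') \<le> L * norm (K w - K w')"
    unfolding GK .
  then have "m / L\<^sup>2 * (norm (w - w'))\<^sup>2 \<le> m / L\<^sup>2 * (L * norm (K w - K w'))\<^sup>2"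
    using m by (intro mult_left_mono power_mono) auto
  also have "\<dots> = m * (norm (K w - K w'))\<^sup>2"
    using L by (simp add: power_mult_distrib field_simps)
  also have "\<dots> \<le> (K w - K w') \<bullet> (w - w')"
    using sm[unfolded strongly_monotone_def, rule_format, of "K w" "K w'"] unfolding GK
    by (simp only: inner_commute)
  finally show "m / (max LG m)\<^sup>2 * (norm (w - w'))\<^sup>2 \<le> (K w - K w') \<bullet> (w - w')"
    by (simp add: L_def)
qed

lemma strongly_monotone_lipschitz_inverse:
  fixes G :: "'a::{real_inner,complete_space} \<Rightarrow> 'a"
  assumes m: "m > 0" and sm: "strongly_monotone m G" and lip: "LG-lipschitz_on UNIV G"
  obtains K mK where "\<And>w. G (K w) = w" "mK > 0" "strongly_monotone mK K"
    "(1 / m)-lipschitz_on UNIV K"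
proof
  show "G (inv G w) = w" for w
    using strongly_monotone_lipschitz_surj[OF assms] by (simp add: surj_f_inv_f)
  then show "strongly_monotone (m / (max LG m)\<^sup>2) (inv G)" "(1 / m)-lipschitz_on UNIV (inv G)"
    using strongly_monotone_right_inverse_strongly_monotone[OF assms]
      strongly_monotone_right_inverse_lipschitz[OF m sm] by blast+
  show "m / (max LG m)\<^sup>2 > 0"
    using m by simp
qed
section \<open>Absolute continuity and Dini derivatives\<close>

definition nonoverlapping :: "real \<Rightarrow> real \<Rightarrow> 'i set \<Rightarrow> ('i \<Rightarrow> real) \<Rightarrow> ('i \<Rightarrow> real) \<Rightarrow> bool" where
  "nonoverlapping a b I u v \<longleftrightarrow> (\<forall>i\<in>I. a \<le> u i \<and> u i \<le> v i \<and> v i \<le> b) \<and>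
     (\<forall>i\<in>I. \<forall>j\<in>I. i \<noteq> j \<longrightarrow> v i \<le> u j \<or> v j \<le> u i)"

lemma abs_cont_on_iff:
  "abs_cont_on a b f \<longleftrightarrow> (\<forall>\<epsilon>>0. \<exists>\<delta>>0. \<forall>(n::nat) u v. nonoverlapping a b {..<n} u v \<and> (\<Sum>i<n. v i - u i) < \<delta>
     \<longrightarrow> (\<Sum>i<n. norm (f (v i) - f (u i))) < \<epsilon>)"
  unfolding abs_cont_on_def nonoverlapping_def Ball_def lessThan_iff by (simp add: conj_assoc)

lemma nonoverlapping_mono:
  "nonoverlapping c d I u v \<Longrightarrow> a \<le> c \<Longrightarrow> d \<le> b \<Longrightarrow> nonoverlapping a b I u v"
  unfolding nonoverlapping_def by force

lemma abs_cont_onD_finite: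
  fixes f :: "real \<Rightarrow> 'a::real_normed_vector"
  assumes "abs_cont_on a b f" "\<epsilon> > 0"
  shows "\<exists>\<delta>>0. \<forall>(I :: 'b set) u v. finite I \<and> nonoverlapping a b I u v \<and> (\<Sum>i\<in>I. v i - u i) < \<delta>
    \<longrightarrow> (\<Sum>i\<in>I. norm (f (v i) - f (u i))) < \<epsilon>"
proof -
  obtain \<delta> where \<delta>: "\<delta> > 0" and H: "\<forall>(n::nat) u v. nonoverlapping a b {..<n} u v \<and> (\<Sum>i<n. v i - u i) < \<delta>
      \<longrightarrow> (\<Sum>i<n. norm (f (v i) - f (u i))) < \<epsilon>"
    using assms unfolding abs_cont_on_iff by blast
  have "(\<Sum>i\<in>I. norm (f (v i) - f (u i))) < \<epsilon>"
    if I: "finite I" and uv: "nonoverlapping a b I u v" and small: "(\<Sum>i\<in>I. v i - u i) < \<delta>"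
    for I :: "'b set" and u v
  proof -
    \<comment> \<open>enumerate \<open>I\<close> to match the definition, which is stated for families indexed by \<open>{..<n}\<close>\<close>
    obtain h where h: "bij_betw h {..<card I} I"
      using ex_bij_betw_nat_finite[OF I] by (auto simp: atLeast0LessThan)
    have reindex: "(\<Sum>i<card I. g (h i)) = (\<Sum>i\<in>I. g i)" for g :: "'b \<Rightarrow> real"
      by (rule sum.reindex_bij_betw[OF h])
    have hI: "h i \<in> I" if "i \<in> {..<card I}" for i
      using h that by (auto simp: bij_betw_def)
    have hinj: "h i \<noteq> h j" if "i \<in> {..<card I}" "j \<in> {..<card I}" "i \<noteq> j" for i j
      using h that by (auto simp: bij_betw_def inj_on_def)
    have inside: "\<forall>i\<in>I. a \<le> u i \<and> u i \<le> v i \<and> v i \<le> b"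
      and sep: "\<forall>i\<in>I. \<forall>j\<in>I. i \<noteq> j \<longrightarrow> v i \<le> u j \<or> v j \<le> u i"
      using uv by (simp_all add: nonoverlapping_def)
    have "nonoverlapping a b {..<card I} (\<lambda>i. u (h i)) (\<lambda>i. v (h i))"
      unfolding nonoverlapping_def
    proof (rule conjI; intro ballI impI)
      fix i assume "i \<in> {..<card I}"
      then show "a \<le> u (h i) \<and> u (h i) \<le> v (h i) \<and> v (h i) \<le> b"
        using inside hI by blast
    next
      fix i j assume ij: "i \<in> {..<card I}" "j \<in> {..<card I}" "i \<noteq> j"
      then show "v (h i) \<le> u (h j) \<or> v (h j) \<le> u (h i)"
        using sep hI[OF ij(1)] hI[OF ij(2)] hinj[OF ij] by blast
    qed
    moreover have "(\<Sum>i<card I. v (h i) - u (h i)) < \<delta>"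
      using small reindex[of "\<lambda>i. v i - u i"] by simp
    ultimately have "(\<Sum>i<card I. norm (f (v (h i)) - f (u (h i)))) < \<epsilon>"
      using H by blast
    then show ?thesis
      using reindex[of "\<lambda>i. norm (f (v i) - f (u i))"] by simp
  qed
  then show ?thesis
    using \<delta> by blast
qed

lemma abs_cont_on_imp_continuous_on:
  fixes f :: "real \<Rightarrow> 'a::real_normed_vector"
  assumes "abs_cont_on a b f"
  shows "continuous_on {a..b} f"
  unfolding continuous_on_iff
proof (intro ballI allI impI)
  fix t e :: real assume t: "t \<in> {a..b}" and e: "e > 0"
  obtain \<delta> where \<delta>: "\<delta> > 0" and H: "\<forall>(n::nat) u v. nonoverlapping a b {..<n} u v \<and> (\<Sum>i<n. v i - u i) < \<delta>
      \<longrightarrow> (\<Sum>i<n. norm (f (v i) - f (u i))) < e"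
    using assms e unfolding abs_cont_on_iff by blast
  show "\<exists>d>0. \<forall>s\<in>{a..b}. dist s t < d \<longrightarrow> dist (f s) (f t) < e"
  proof (intro exI[of _ \<delta>] conjI ballI impI \<delta>)
    fix s assume s: "s \<in> {a..b}" "dist s t < \<delta>"
    have "nonoverlapping a b {..<1::nat} (\<lambda>_. min s t) (\<lambda>_. max s t)"
      using s t by (auto simp: nonoverlapping_def)
    moreover have "(\<Sum>i<1::nat. max s t - min s t) < \<delta>"
      using s by (auto simp: dist_real_def max_def min_def abs_if split: if_splits)
    ultimately have "(\<Sum>i<1::nat. norm (f (max s t) - f (min s t))) < e"
      using H by blast
    then show "dist (f s) (f t) < e"
      by (cases "s \<le> t") (auto simp: dist_norm norm_minus_commute max_def min_def)
  qed
qed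

lemma abs_cont_on_subinterval:
  assumes "abs_cont_on a b f" "a \<le> c" "d \<le> b"
  shows "abs_cont_on c d f"
  using assms(1) nonoverlapping_mono[OF _ assms(2,3)] unfolding abs_cont_on_iff by meson

lemma abs_cont_on_dominated:
  fixes f :: "real \<Rightarrow> 'a::real_normed_vector"
    and g :: "real \<Rightarrow> 'b::real_normed_vector" and h :: "real \<Rightarrow> 'c::real_normed_vector"
  assumes g: "abs_cont_on a b g" and h: "abs_cont_on a b h" and K: "K \<ge> 0"
    and bound: "\<And>u v. u \<in> {a..b} \<Longrightarrow> v \<in> {a..b} \<Longrightarrow>
      norm (f v - f u) \<le> K * (norm (g v - g u) + norm (h v - h u))"
  shows "abs_cont_on a b f"
  unfolding abs_cont_on_iff
proof (intro allI impI)
  fix e :: real assume e: "e > 0"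
  define e' where "e' = e / (2 * (K + 1))"
  have e': "e' > 0"
    using e K by (simp add: e'_def)
  have "e = 2 * e' * (K + 1)"
    using K by (simp add: e'_def field_simps)
  then have "K * (e' + e') < e"
    using e' by (simp add: algebra_simps)
  obtain \<delta>g where \<delta>g: "\<delta>g > 0" and Hg: "\<forall>(n::nat) u v. nonoverlapping a b {..<n} u v \<and> (\<Sum>i<n. v i - u i) < \<delta>g
      \<longrightarrow> (\<Sum>i<n. norm (g (v i) - g (u i))) < e'"
    using g e' unfolding abs_cont_on_iff by blast
  obtain \<delta>h where \<delta>h: "\<delta>h > 0" and Hh: "\<forall>(n::nat) u v. nonoverlapping a b {..<n} u v \<and> (\<Sum>i<n. v i - u i) < \<delta>h
      \<longrightarrow> (\<Sum>i<n. norm (h (v i) - h (u i))) < e'"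
    using h e' unfolding abs_cont_on_iff by blast
  show "\<exists>\<delta>>0. \<forall>(n::nat) u v. nonoverlapping a b {..<n} u v \<and> (\<Sum>i<n. v i - u i) < \<delta>
      \<longrightarrow> (\<Sum>i<n. norm (f (v i) - f (u i))) < e"
  proof (intro exI[of _ "min \<delta>g \<delta>h"] conjI allI impI)
    show "min \<delta>g \<delta>h > 0"
      using \<delta>g \<delta>h by simp
    fix n and u v :: "nat \<Rightarrow> real"
    assume uv: "nonoverlapping a b {..<n} u v \<and> (\<Sum>i<n. v i - u i) < min \<delta>g \<delta>h"
    have "a \<le> u i \<and> u i \<le> v i \<and> v i \<le> b" if "i \<in> {..<n}" for i
      using uv that unfolding nonoverlapping_def by blast
    then have "u i \<in> {a..b} \<and> v i \<in> {a..b}" if "i \<in> {..<n}" for i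
      using that by fastforce
    then have "(\<Sum>i<n. norm (f (v i) - f (u i)))
        \<le> (\<Sum>i<n. K * (norm (g (v i) - g (u i)) + norm (h (v i) - h (u i))))"
      by (intro sum_mono bound) auto
    also have "\<dots> = K * ((\<Sum>i<n. norm (g (v i) - g (u i))) + (\<Sum>i<n. norm (h (v i) - h (u i))))"
      by (simp add: sum_distrib_left sum.distrib distrib_left)
    also have "\<dots> \<le> K * (e' + e')"
    proof -
      have "(\<Sum>i<n. norm (g (v i) - g (u i))) < e'" "(\<Sum>i<n. norm (h (v i) - h (u i))) < e'"
        using uv Hg Hh by auto
      then show ?thesis
        using K by (intro mult_left_mono add_mono) auto
    qed
    finally show "(\<Sum>i<n. norm (f (v i) - f (u i))) < e"
      using \<open>K * (e' + e') < e\<close> by linarith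
  qed
qed

lemma abs_cont_on_id: "abs_cont_on a b (\<lambda>t. t)"
  unfolding abs_cont_on_iff
proof (intro allI impI)
  fix e :: real assume e: "e > 0"
  show "\<exists>\<delta>>0. \<forall>(n::nat) u v. nonoverlapping a b {..<n} u v \<and> (\<Sum>i<n. v i - u i) < \<delta>
      \<longrightarrow> (\<Sum>i<n. norm (v i - u i)) < e"
  proof (intro exI[of _ e] conjI allI impI e)
    fix n and u v :: "nat \<Rightarrow> real"
    assume A: "nonoverlapping a b {..<n} u v \<and> (\<Sum>i<n. v i - u i) < e"
    have "(\<Sum>i<n. norm (v i - u i)) = (\<Sum>i<n. v i - u i)"
      using A by (intro sum.cong) (auto simp: nonoverlapping_def)
    then show "(\<Sum>i<n. norm (v i - u i)) < e"
      using A by simp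
  qed
qed

lemma lipschitz_on_imp_abs_cont_on:
  fixes f :: "real \<Rightarrow> 'a::real_normed_vector"
  assumes "K-lipschitz_on {a..b} f"
  shows "abs_cont_on a b f"
proof (rule abs_cont_on_dominated[OF abs_cont_on_id abs_cont_on_id])
  show "K \<ge> 0"
    using assms by (rule lipschitz_on_nonneg)
  fix u v assume u: "u \<in> {a..b}" and v: "v \<in> {a..b}"
  have "norm (f v - f u) \<le> K * norm (v - u)"
    by (rule lipschitz_on_normD[OF assms v u])
  also have "\<dots> \<le> K * (norm (v - u) + norm (v - u))"
    using lipschitz_on_nonneg[OF assms] by (intro mult_left_mono) auto
  finally show "norm (f v - f u) \<le> K * (norm (v - u) + norm (v - u))" .
qed

lemma abs_cont_on_mult:
  fixes f g :: "real \<Rightarrow> real"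
  assumes f: "abs_cont_on a b f" and g: "abs_cont_on a b g"
  shows "abs_cont_on a b (\<lambda>t. f t * g t)"
proof -
  obtain Bf where Bf: "\<And>t. t \<in> {a..b} \<Longrightarrow> norm (f t) \<le> Bf"
    using continuous_on_compact_bound[OF compact_Icc abs_cont_on_imp_continuous_on[OF f]] by blast
  obtain Bg where Bg: "Bg \<ge> 0" "\<And>t. t \<in> {a..b} \<Longrightarrow> norm (g t) \<le> Bg"
    using continuous_on_compact_bound[OF compact_Icc abs_cont_on_imp_continuous_on[OF g]] by blast
  define B where "B = max Bf Bg"
  show ?thesis
  proof (rule abs_cont_on_dominated[OF f g])
    show "B \<ge> 0"
      using Bg by (simp add: B_def)
    fix u v assume u: "u \<in> {a..b}" and v: "v \<in> {a..b}"
    have "\<bar>f v * g v - f u * g u\<bar> = \<bar>(f v - f u) * g v + f u * (g v - g u)\<bar>"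
      by (simp add: algebra_simps)
    also have "\<dots> \<le> \<bar>f v - f u\<bar> * \<bar>g v\<bar> + \<bar>f u\<bar> * \<bar>g v - g u\<bar>"
      by (metis abs_mult abs_triangle_ineq)
    also have "\<dots> \<le> \<bar>f v - f u\<bar> * B + B * \<bar>g v - g u\<bar>"
      using Bf[OF u] Bg(2)[OF v] by (intro add_mono mult_left_mono mult_right_mono) (auto simp: B_def)
    finally show "norm (f v * g v - f u * g u) \<le> B * (norm (f v - f u) + norm (g v - g u))"
      by (simp add: algebra_simps)
  qed
qed

lemma abs_cont_on_minus_linear:
  fixes \<phi> :: "real \<Rightarrow> real"
  assumes "abs_cont_on a b \<phi>"
  shows "abs_cont_on a b (\<lambda>t. \<phi> t - c * t)"
proof (rule abs_cont_on_dominated[OF assms abs_cont_on_id])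
  show "max 1 \<bar>c\<bar> \<ge> 0"
    by simp
  fix u v
  have "\<bar>(\<phi> v - c * v) - (\<phi> u - c * u)\<bar> = \<bar>(\<phi> v - \<phi> u) - c * (v - u)\<bar>"
    by (simp add: algebra_simps)
  also have "\<dots> \<le> \<bar>\<phi> v - \<phi> u\<bar> + \<bar>c * (v - u)\<bar>"
    by (rule abs_triangle_ineq4)
  also have "\<dots> = \<bar>\<phi> v - \<phi> u\<bar> + \<bar>c\<bar> * \<bar>v - u\<bar>"
    by (simp add: abs_mult)
  also have "\<dots> \<le> max 1 \<bar>c\<bar> * \<bar>\<phi> v - \<phi> u\<bar> + max 1 \<bar>c\<bar> * \<bar>v - u\<bar>"
    using mult_right_mono[of 1 "max 1 \<bar>c\<bar>" "\<bar>\<phi> v - \<phi> u\<bar>"]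
      mult_right_mono[of "\<bar>c\<bar>" "max 1 \<bar>c\<bar>" "\<bar>v - u\<bar>"]
    by simp
  finally show "norm ((\<phi> v - c * v) - (\<phi> u - c * u)) \<le> max 1 \<bar>c\<bar> * (norm (\<phi> v - \<phi> u) + norm (v - u))"
    by (simp add: distrib_left)
qed

lemma component_of_open_real_eq_interval:
  fixes W :: "real set"
  assumes W: "open W" "W \<subseteq> {a<..<b}" and c: "c \<in> components W"
  shows "c = {Inf c<..<Sup c}" "a \<le> Inf c" "Inf c < Sup c" "Sup c \<le> b"
proof -
  have cW: "c \<subseteq> W" and cne: "c \<noteq> {}"
    using c by (auto simp: in_components_subset in_components_nonempty)
  have oc: "open c"
    using open_components[OF W(1) c] .
  have ic: "is_interval c"
    using in_components_connected[OF c] is_interval_connected_1 by blast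
  have bl: "bdd_below c"
    using cW W(2) by (intro bdd_belowI[of _ a]) auto
  have bu: "bdd_above c"
    using cW W(2) by (intro bdd_aboveI[of _ b]) auto
  show "a \<le> Inf c"
    using cne cW W(2) by (intro cInf_greatest) auto
  show "Sup c \<le> b"
    using cne cW W(2) by (intro cSup_least) auto
  have inside: "t \<in> {Inf c<..<Sup c}" if t: "t \<in> c" for t
  proof -
    obtain r where r: "r > 0" "ball t r \<subseteq> c"
      using open_contains_ball_eq[OF oc] t by blast
    then have "t - r/2 \<in> ball t r" "t + r/2 \<in> ball t r"
      by (simp_all add: dist_real_def)
    then have "t - r/2 \<in> c" "t + r/2 \<in> c"
      using r(2) by blast+
    then have "Inf c \<le> t - r/2" "t + r/2 \<le> Sup c"
      using cInf_lower[OF _ bl] cSup_upper[OF _ bu] by blast+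
    then show ?thesis
      using r by simp
  qed
  have filled: "t \<in> c" if t: "t \<in> {Inf c<..<Sup c}" for t
  proof -
    obtain x1 where x1: "x1 \<in> c" "x1 < t"
      using t cne bl by (auto simp: cInf_less_iff)
    obtain x2 where x2: "x2 \<in> c" "t < x2"
      using t cne bu by (auto simp: less_cSup_iff)
    show ?thesis
      using ic[unfolded is_interval_1, rule_format, OF x1(1) x2(1), of t] x1(2) x2(2) by simp
  qed
  show "c = {Inf c<..<Sup c}"
    using inside filled by blast
  then show "Inf c < Sup c"
    using cne by fastforce
qed

lemma components_of_open_real_separated:
  fixes W :: "real set"
  assumes W: "open W" "W \<subseteq> {a<..<b}"
    and c: "c \<in> components W" "c' \<in> components W" "c \<noteq> c'"
  shows "Sup c \<le> Inf c' \<or> Sup c' \<le> Inf c"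
proof (rule ccontr)
  note comp = component_of_open_real_eq_interval[OF W]
  define m where "m = (max (Inf c) (Inf c') + min (Sup c) (Sup c')) / 2"
  assume "\<not> ?thesis"
  then have "m \<in> {Inf c<..<Sup c}" "m \<in> {Inf c'<..<Sup c'}"
    using comp(3)[OF c(1)] comp(3)[OF c(2)] by (auto simp: m_def)
  then have "m \<in> c \<inter> c'"
    using comp(1)[OF c(1)] comp(1)[OF c(2)] by blast
  then show False
    using pairwise_disjoint_components[of W] c unfolding pairwise_def by blast
qed

lemma negligible_open_cover:
  assumes "negligible N" "\<delta> > 0"
  obtains U where "open U" "N \<subseteq> U" "U \<in> lmeasurable" "measure lebesgue U < \<delta>"
proof -
  obtain U where U: "open U" "N \<subseteq> U" "U - N \<in> lmeasurable" "emeasure lebesgue (U - N) < ennreal \<delta>"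
    using sets_lebesgue_outer_open[OF negligible_imp_sets[OF assms(1)] assms(2)] by blast
  have N: "N \<in> lmeasurable" "measure lebesgue N = 0"
    using assms(1) by (auto simp: negligible_imp_measurable negligible_imp_measure0)
  have UN: "U = (U - N) \<union> N"
    using U(2) by blast
  have "U \<in> lmeasurable"
    using U(3) N(1) by (subst UN) (rule fmeasurable.Un)
  moreover have "measure lebesgue U \<le> measure lebesgue (U - N) + measure lebesgue N"
    using U(3) N(1) by (subst UN) (intro measure_Un_le fmeasurableD)
  moreover have "measure lebesgue (U - N) < \<delta>"
    using U(3,4) assms(2) by (simp add: emeasure_eq_measure2 ennreal_less_iff)
  ultimately show thesis
    using that U(1,2) N(2) by simp
qed

lemma sum_measure_le_disjoint:
  assumes "finite \<F>" "pairwise disjnt \<F>" "\<And>S. S \<in> \<F> \<Longrightarrow> S \<in> lmeasurable"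
    "\<Union>\<F> \<subseteq> W" "W \<in> lmeasurable"
  shows "(\<Sum>S\<in>\<F>. measure lebesgue S) \<le> measure lebesgue W"
proof -
  have "(\<Sum>S\<in>\<F>. measure lebesgue S) = measure lebesgue (\<Union>\<F>)"
    using assms(1,3,2) by (rule measure_Union'[symmetric])
  also have "\<dots> \<le> measure lebesgue W"
    using assms by (intro measure_mono_fmeasurable) (auto intro: fmeasurableD)
  finally show ?thesis .
qed

lemma sum_component_lengths_le:
  fixes W :: "real set"
  assumes W: "open W" "W \<subseteq> {a<..<b}" and I: "finite I" "I \<subseteq> components W"
  shows "(\<Sum>c\<in>I. Sup c - Inf c) \<le> measure lebesgue W"
proof -
  note comp = component_of_open_real_eq_interval[OF W]
  have in_comp: "c \<in> components W" if "c \<in> I" for c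
    using that I(2) by blast
  have lmeas: "c \<in> lmeasurable" if "c \<in> I" for c
    by (subst comp(1)[OF in_comp[OF that]]) (simp add: lmeasurable_open)
  have "(\<Sum>c\<in>I. Sup c - Inf c) = (\<Sum>c\<in>I. measure lebesgue c)"
  proof (rule sum.cong)
    fix c assume "c \<in> I"
    then have c: "c \<in> components W"
      by (rule in_comp)
    then have "measure lebesgue c = Sup c - Inf c"
      using comp(3)[OF c] by (subst comp(1)[OF c]) simp
    then show "Sup c - Inf c = measure lebesgue c"
      by simp
  qed simp
  also have "\<dots> \<le> measure lebesgue W"
  proof (rule sum_measure_le_disjoint[OF I(1) _ lmeas])
    have "pairwise disjnt (components W)"
      using pairwise_disjoint_components[of W] unfolding pairwise_def disjnt_def by blast
    then show "pairwise disjnt I"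
      using I(2) by (rule pairwise_subset)
    show "\<Union> I \<subseteq> W"
      using I(2) by (auto dest: in_components_subset)
    show "W \<in> lmeasurable"
      using W by (intro lmeasurable_open bounded_subset[OF compact_imp_bounded[OF compact_Icc[of a b]]]) auto
  qed
  finally show ?thesis .
qed

lemma component_oscillation_sum_less:
  fixes \<phi> :: "real \<Rightarrow> real"
  assumes small_var: "\<forall>(I :: real set set) u v. finite I \<and> nonoverlapping a b I u v \<and>
      (\<Sum>i\<in>I. v i - u i) < \<delta> \<longrightarrow> (\<Sum>i\<in>I. norm (\<phi> (v i) - \<phi> (u i))) < e"
    and W: "open W" "W \<subseteq> {a<..<b}" "measure lebesgue W < \<delta>"
    and I: "finite I" "I \<subseteq> components W"
    and st: "\<And>c. c \<in> I \<Longrightarrow> s c \<in> {Inf c..Sup c} \<and> t c \<in> {Inf c..Sup c}"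
  shows "(\<Sum>c\<in>I. \<bar>\<phi> (t c) - \<phi> (s c)\<bar>) < e"
proof -
  note comp = component_of_open_real_eq_interval[OF W(1,2)]
  define u where "u c = min (s c) (t c)" for c
  define v where "v c = max (s c) (t c)" for c
  have uv: "Inf c \<le> u c \<and> u c \<le> v c \<and> v c \<le> Sup c" if "c \<in> I" for c
    using st[OF that] by (auto simp: u_def v_def)
  have "a \<le> u c \<and> u c \<le> v c \<and> v c \<le> b" if c: "c \<in> I" for c
    using uv[OF c] comp(2,4)[of c] c I(2) by auto
  moreover have "v c \<le> u c' \<or> v c' \<le> u c" if c: "c \<in> I" "c' \<in> I" "c \<noteq> c'" for c c'
  proof -
    have "Sup c \<le> Inf c' \<or> Sup c' \<le> Inf c"
      using components_of_open_real_separated[OF W(1,2)] c I(2) by blast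
    then show ?thesis
      using uv[OF c(1)] uv[OF c(2)] by auto
  qed
  ultimately have "nonoverlapping a b I u v"
    unfolding nonoverlapping_def by blast
  moreover have "(\<Sum>c\<in>I. v c - u c) \<le> (\<Sum>c\<in>I. Sup c - Inf c)"
    using uv by (intro sum_mono) force
  then have "(\<Sum>c\<in>I. v c - u c) < \<delta>"
    using sum_component_lengths_le[OF W(1,2) I] W(3) by linarith
  ultimately have "(\<Sum>c\<in>I. norm (\<phi> (v c) - \<phi> (u c))) < e"
    using small_var I(1) by blast
  moreover have "norm (\<phi> (v c) - \<phi> (u c)) = \<bar>\<phi> (t c) - \<phi> (s c)\<bar>" for c
    by (auto simp: u_def v_def min_def max_def abs_minus_commute)
  ultimately show ?thesis
    by simp
qed

lemma abs_cont_on_negligible_image_open: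
  fixes \<phi> :: "real \<Rightarrow> real"
  assumes ac: "abs_cont_on a b \<phi>" and N: "N \<subseteq> {a<..<b}" "negligible N"
  shows "negligible (\<phi> ` N)"
  unfolding negligible_outer_le
proof (intro allI impI)
  fix e :: real assume e: "e > 0"
  obtain \<delta> where \<delta>: "\<delta> > 0" and small_var: "\<forall>(I :: real set set) u v. finite I \<and> nonoverlapping a b I u v
      \<and> (\<Sum>i\<in>I. v i - u i) < \<delta> \<longrightarrow> (\<Sum>i\<in>I. norm (\<phi> (v i) - \<phi> (u i))) < e"
    using abs_cont_onD_finite[OF ac e] by blast
  obtain U where U: "open U" "N \<subseteq> U" "U \<in> lmeasurable" "measure lebesgue U < \<delta>"
    using negligible_open_cover[OF N(2) \<delta>] by blast
  define W where "W = U \<inter> {a<..<b}"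
  have W: "open W" "W \<subseteq> {a<..<b}" "N \<subseteq> W"
    using U(1,2) N(1) by (auto simp: W_def)
  have "measure lebesgue W \<le> measure lebesgue U"
    using U(3) by (intro measure_mono_fmeasurable) (auto simp: W_def fmeasurableD)
  then have W_small: "measure lebesgue W < \<delta>"
    using U(4) by linarith
  \<comment> \<open>cover \<open>\<phi> ` N\<close> by the images of the closures of the components of \<open>W\<close>\<close>
  note comp = component_of_open_real_eq_interval[OF W(1,2)]
  have "\<exists>s\<in>{Inf c..Sup c}. \<exists>t\<in>{Inf c..Sup c}. \<forall>y\<in>{Inf c..Sup c}. \<phi> s \<le> \<phi> y \<and> \<phi> y \<le> \<phi> t"
    if "c \<in> components W" for c
  proof -
    have cont: "continuous_on {Inf c..Sup c} \<phi>"
      using continuous_on_subset[OF abs_cont_on_imp_continuous_on[OF ac]] comp[OF that] by auto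
    have ne: "{Inf c..Sup c} \<noteq> {}"
      using comp(3)[OF that] by simp
    show ?thesis
      using continuous_attains_inf[OF compact_Icc ne cont] continuous_attains_sup[OF compact_Icc ne cont]
      by blast
  qed
  then obtain s t where st: "\<And>c. c \<in> components W \<Longrightarrow> s c \<in> {Inf c..Sup c} \<and> t c \<in> {Inf c..Sup c} \<and>
      (\<forall>y\<in>{Inf c..Sup c}. \<phi> (s c) \<le> \<phi> y \<and> \<phi> y \<le> \<phi> (t c))"
    by metis
  define J where "J c = {\<phi> (s c)..\<phi> (t c)}" for c
  have J_bound: "measure lebesgue (\<Union>c\<in>I. J c) \<le> e" if I: "I \<subseteq> components W" "finite I" for I
  proof -
    have "measure lebesgue (\<Union>c\<in>I. J c) \<le> (\<Sum>c\<in>I. measure lebesgue (J c))"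
      using I(2) by (intro measure_UNION_le) (auto simp: J_def)
    also have "\<dots> = (\<Sum>c\<in>I. \<bar>\<phi> (t c) - \<phi> (s c)\<bar>)"
      using st I(1) by (intro sum.cong) (auto simp: J_def)
    also have "\<dots> < e"
      using component_oscillation_sum_less[OF small_var W(1,2) W_small I(2,1)] st I(1) by blast
    finally show ?thesis
      by simp
  qed
  have "pairwise disjnt (components W)"
    using pairwise_disjoint_components[of W] unfolding pairwise_def disjnt_def by blast
  then have "countable (components W)"
    using open_components[OF W(1)] by (intro countable_disjoint_open_subsets) auto
  note J_cover = fmeasurable_UN_bound[OF this _ J_bound] measure_UN_bound[OF this _ J_bound]
  have "\<phi> ` N \<subseteq> (\<Union>c\<in>components W. J c)"
  proof
    fix y assume "y \<in> \<phi> ` N"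
    then obtain x where x: "x \<in> N" "y = \<phi> x"
      by blast
    then obtain c where c: "c \<in> components W" "x \<in> c"
      using W(3) Union_components[of W] by blast
    then have "x \<in> {Inf c..Sup c}"
      using comp(1)[OF c(1)] by (metis greaterThanLessThan_subseteq_atLeastAtMost_iff order_refl subsetD)
    then show "y \<in> (\<Union>c\<in>components W. J c)"
      using st[OF c(1)] c(1) x(2) by (auto simp: J_def)
  qed
  then show "\<exists>T. \<phi> ` N \<subseteq> T \<and> T \<in> lmeasurable \<and> measure lebesgue T \<le> e"
    using J_cover by (auto simp: J_def)
qed

lemma abs_cont_on_negligible_image:
  fixes \<phi> :: "real \<Rightarrow> real"
  assumes "abs_cont_on a b \<phi>" "N \<subseteq> {a..b}" "negligible N"
  shows "negligible (\<phi> ` N)"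
proof -
  have "negligible (\<phi> ` (N \<inter> {a<..<b}))"
    using assms(3) by (intro abs_cont_on_negligible_image_open[OF assms(1)]) (auto intro: negligible_subset)
  moreover have "negligible {\<phi> a, \<phi> b}"
    by (intro negligible_finite) simp
  moreover have "\<phi> ` N \<subseteq> \<phi> ` (N \<inter> {a<..<b}) \<union> {\<phi> a, \<phi> b}"
  proof
    fix y assume "y \<in> \<phi> ` N"
    then obtain x where x: "x \<in> N" "y = \<phi> x"
      by blast
    then have "x \<in> N \<inter> {a<..<b} \<or> x = a \<or> x = b"
      using assms(2) by force
    then show "y \<in> \<phi> ` (N \<inter> {a<..<b}) \<union> {\<phi> a, \<phi> b}"
      using x(2) by blast
  qed
  ultimately show ?thesis
    using negligible_Un negligible_subset by blast
qed

lemma last_crossing: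
  fixes \<psi> :: "real \<Rightarrow> real"
  assumes cont: "continuous_on {a..b} \<psi>" and y: "\<psi> a < y" "y < \<psi> b" and "a \<le> b"
  obtains t where "a \<le> t" "t < b" "\<psi> t = y" "\<And>s. t < s \<Longrightarrow> s \<le> b \<Longrightarrow> y < \<psi> s"
proof -
  define S where "S = {a..b} \<inter> \<psi> -` {..y}"
  define t where "t = Sup S"
  have "closed S"
    unfolding S_def by (rule continuous_closed_preimage[OF cont]) auto
  moreover have "a \<in> S"
    using y assms(4) by (simp add: S_def)
  moreover have bdd: "bdd_above S"
    by (rule bdd_aboveI[of _ b]) (simp add: S_def)
  ultimately have "t \<in> S"
    unfolding t_def using closed_contains_Sup by blast
  then have t: "a \<le> t" "t \<le> b" "\<psi> t \<le> y"
    by (auto simp: S_def)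
  have above: "y < \<psi> s" if "t < s" "s \<le> b" for s
  proof (rule ccontr)
    assume "\<not> y < \<psi> s"
    then have "s \<in> S"
      using that t by (simp add: S_def)
    then have "s \<le> t"
      unfolding t_def using bdd by (rule cSup_upper)
    then show False
      using that by simp
  qed
  have "t < b"
    using t y(2) by (cases "t = b") auto
  have "\<psi> t = y"
  proof (rule ccontr)
    assume "\<psi> t \<noteq> y"
    then have "\<psi> t < y"
      using t by simp
    moreover have "continuous_on {t..b} \<psi>"
      using continuous_on_subset[OF cont] t by auto
    ultimately obtain s where "t \<le> s" "s \<le> b" "\<psi> s = y"
      using IVT'[of \<psi> t y b] y(2) \<open>t < b\<close> by auto
    then show False
      using above[of s] \<open>\<psi> t < y\<close> by (cases "s = t") auto
  qed
  show thesis
    using that t(1) \<open>t < b\<close> \<open>\<psi> t = y\<close> above by blast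
qed

lemma abs_cont_on_nonincreasing:
  fixes \<phi> :: "real \<Rightarrow> real"
  assumes ab: "a \<le> b" and ac: "abs_cont_on a b \<phi>" and N: "negligible N"
    and dini: "\<And>t \<eta>. t \<in> {a..<b} \<Longrightarrow> t \<notin> N \<Longrightarrow> \<eta> > 0 \<Longrightarrow>
      eventually (\<lambda>s. \<phi> s - \<phi> t \<le> \<eta> * (s - t)) (at_right t)"
  shows "\<phi> b \<le> \<phi> a"
proof (rule ccontr)
  assume "\<not> ?thesis"
  then have lt: "\<phi> a < \<phi> b"
    by simp
  then have "a < b"
    using ab by (cases "a = b") auto
  \<comment> \<open>subtract half the mean slope: \<open>\<psi>\<close> still increases from \<open>a\<close> to \<open>b\<close>, yet off \<open>N\<close> it decreases to the right\<close>
  define \<epsilon> where "\<epsilon> = (\<phi> b - \<phi> a) / (2 * (b - a))"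
  define \<psi> where "\<psi> t = \<phi> t - \<epsilon> * t" for t
  have \<epsilon>: "\<epsilon> > 0"
    using lt \<open>a < b\<close> by (simp add: \<epsilon>_def)
  have "\<epsilon> * (b - a) = (\<phi> b - \<phi> a) / 2"
    using \<open>a < b\<close> by (simp add: \<epsilon>_def field_simps)
  then have "\<psi> b - \<psi> a = (\<phi> b - \<phi> a) / 2"
    by (simp add: \<psi>_def algebra_simps)
  then have \<psi>ab: "\<psi> a < \<psi> b"
    using lt by simp
  have ac\<psi>: "abs_cont_on a b \<psi>"
    unfolding \<psi>_def[abs_def] by (rule abs_cont_on_minus_linear[OF ac])
  \<comment> \<open>by the Lusin property, some level \<open>y\<close> between \<open>\<psi> a\<close> and \<open>\<psi> b\<close> is attained only outside \<open>N\<close>\<close>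
  have "negligible (\<psi> ` (N \<inter> {a..b}))"
    using N by (intro abs_cont_on_negligible_image[OF ac\<psi>]) (auto intro: negligible_subset)
  moreover have "\<not> negligible {\<psi> a<..<\<psi> b}"
    using negligible_interval(2)[of "\<psi> a" "\<psi> b"] \<psi>ab by simp
  ultimately obtain y where y: "\<psi> a < y" "y < \<psi> b" "y \<notin> \<psi> ` (N \<inter> {a..b})"
    by (meson greaterThanLessThan_iff negligible_subset subsetI)
  obtain t where t: "a \<le> t" "t < b" "\<psi> t = y" "\<And>s. t < s \<Longrightarrow> s \<le> b \<Longrightarrow> y < \<psi> s"
    using last_crossing[OF abs_cont_on_imp_continuous_on[OF ac\<psi>] y(1,2) ab] by blast
  have "t \<notin> N"
    using y(3) t(1-3) by auto
  then have "eventually (\<lambda>s. \<phi> s - \<phi> t \<le> \<epsilon> / 2 * (s - t)) (at_right t)"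
    using dini[of t "\<epsilon> / 2"] t(1,2) \<epsilon> by simp
  moreover have "eventually (\<lambda>s. t < s \<and> s < b) (at_right t)"
    unfolding eventually_at_right_field using t(2) by blast
  ultimately have "eventually (\<lambda>s. t < s \<and> s < b \<and> \<phi> s - \<phi> t \<le> \<epsilon> / 2 * (s - t)) (at_right t)"
    by eventually_elim simp
  then obtain s where s: "t < s" "s < b" "\<phi> s - \<phi> t \<le> \<epsilon> / 2 * (s - t)"
    using eventually_happens'[OF trivial_limit_at_right_real] by blast
  moreover have "0 < \<epsilon> * (s - t)"
    using \<epsilon> s(1) by simp
  ultimately have "\<psi> s < \<psi> t"
    by (simp add: \<psi>_def algebra_simps)
  then show False
    using t(3,4) s(1,2) by force
qed

lemma upper_dini_le_of_quotient:
  fixes f R :: "real \<Rightarrow> real"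
  assumes R: "(R \<longlongrightarrow> B) (at_right t)"
    and f: "eventually (\<lambda>s. f s - f t \<le> (s - t) * R s) (at_right t)" and \<eta>: "\<eta> > 0"
  shows "eventually (\<lambda>s. f s - f t \<le> (B + \<eta>) * (s - t)) (at_right t)"
proof -
  have "eventually (\<lambda>s. R s < B + \<eta>) (at_right t)"
    using order_tendstoD(2)[OF R] \<eta> by simp
  moreover have "eventually (\<lambda>s. t < s) (at_right t)"
    by (rule eventually_at_right_less)
  ultimately show ?thesis
    using f
  proof eventually_elim
    case (elim s)
    then have "(s - t) * R s \<le> (s - t) * (B + \<eta>)"
      by (intro mult_left_mono) auto
    moreover have "(B + \<eta>) * (s - t) = (s - t) * (B + \<eta>)"
      by (rule mult.commute)
    ultimately show ?case
      using elim(3) by linarith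
  qed
qed

lemma upper_dini_mult:
  fixes f g :: "real \<Rightarrow> real"
  assumes g: "(g has_real_derivative g') (at s)" "\<And>u. g u > 0"
    and f: "\<And>\<eta>. \<eta> > 0 \<Longrightarrow> eventually (\<lambda>u. f u - f s \<le> (B + \<eta>) * (u - s)) (at_right s)"
    and \<eta>: "\<eta> > 0"
  shows "eventually (\<lambda>u. f u * g u - f s * g s \<le> (B * g s + f s * g' + \<eta>) * (u - s)) (at_right s)"
proof -
  define \<eta>' where "\<eta>' = \<eta> / (2 * g s)"
  have \<eta>': "\<eta>' > 0" "\<eta>' * g s = \<eta> / 2"
    using \<eta> g(2)[of s] by (auto simp: \<eta>'_def)
  define R where "R u = (B + \<eta>') * g u + f s * ((g u - g s) / (u - s))" for u
  have "((\<lambda>u. (g u - g s) / (u - s)) \<longlongrightarrow> g') (at_right s)"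
    using has_field_derivativeD[OF g(1)] filterlim_at_split by blast
  moreover have "(g \<longlongrightarrow> g s) (at_right s)"
    using DERIV_isCont[OF g(1)] filterlim_at_split unfolding isCont_def by blast
  ultimately have "(R \<longlongrightarrow> (B + \<eta>') * g s + f s * g') (at_right s)"
    unfolding R_def by (intro tendsto_intros)
  moreover have "eventually (\<lambda>u. f u * g u - f s * g s \<le> (u - s) * R u) (at_right s)"
    using f[OF \<eta>'(1)] eventually_at_right_less[of s]
  proof eventually_elim
    case (elim u)
    have "f u * g u - f s * g s = (f u - f s) * g u + f s * (g u - g s)"
      by (simp add: algebra_simps)
    also have "\<dots> \<le> ((B + \<eta>') * (u - s)) * g u + f s * (g u - g s)"
      using elim(1) g(2)[of u] by (intro add_right_mono mult_right_mono) auto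
    also have "\<dots> = (u - s) * R u"
      using elim(2) by (simp add: R_def field_simps)
    finally show ?case .
  qed
  ultimately have "eventually (\<lambda>u. f u * g u - f s * g s - (f s * g s - f s * g s)
      \<le> ((B + \<eta>') * g s + f s * g' + \<eta> / 2) * (u - s)) (at_right s)"
    using \<eta> by (intro upper_dini_le_of_quotient[where f = "\<lambda>u. f u * g u - f s * g s"]) auto
  then show ?thesis
    using \<eta>'(2) by (simp add: algebra_simps)
qed

lemma C1_imp_lipschitz_on:
  fixes f f' :: "real \<Rightarrow> real"
  assumes der: "\<And>s. s \<in> {a..b} \<Longrightarrow> (f has_real_derivative f' s) (at s within {a..b})"
    and cont: "continuous_on {a..b} f'"
  shows "\<exists>K. K-lipschitz_on {a..b} f"
proof -
  obtain B where B: "B \<ge> 0" "\<And>s. s \<in> {a..b} \<Longrightarrow> norm (f' s) \<le> B"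
    using continuous_on_compact_bound[OF compact_Icc cont] by blast
  have "B-lipschitz_on {a..b} f"
  proof (rule lipschitz_onI)
    fix u v assume u: "u \<in> {a..b}" and v: "v \<in> {a..b}"
    have "norm (f u - f v) \<le> B * norm (u - v)"
      using field_differentiable_bound[OF convex_real_interval(5) der B(2) u v] by simp
    then show "dist (f u) (f v) \<le> B * dist u v"
      by (simp add: dist_norm)
  qed (rule B(1))
  then show ?thesis
    by blast
qed

section \<open>Tikhonov regularization\<close>

lemma inner_minus_inner_self_le:
  fixes d r :: "'a::real_inner"
  shows "d \<bullet> r - r \<bullet> r \<le> (norm d)\<^sup>2 / 4"
proof -
  have "d \<bullet> r \<le> norm d * norm r"
    by (rule norm_cauchy_schwarz)
  moreover have "0 \<le> (norm d / 2 - norm r)\<^sup>2"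
    by simp
  ultimately show ?thesis
    by (simp add: power2_eq_square power2_norm_eq_inner[symmetric] algebra_simps field_simps)
qed

lemma two_mult_le_weighted_squares:
  fixes X Y c :: real
  assumes "c > 0"
  shows "2 * X * Y \<le> c * X\<^sup>2 + Y\<^sup>2 / c"
proof -
  have "0 \<le> (c * X - Y)\<^sup>2 / c"
    using assms by simp
  also have "(c * X - Y)\<^sup>2 / c = c * X\<^sup>2 + Y\<^sup>2 / c - 2 * X * Y"
    using assms by (simp add: power2_eq_square field_simps)
  finally show ?thesis
    by simp
qed

text \<open>The parameter \<open>xd\<close> stands for \<open>x\<dagger> = A\<^sup>-\<^sup>1 u\<dagger>\<close>: \<open>xd_selected\<close> is the variational
  inequality characterizing \<open>u\<dagger> = A xd\<close>, tested at \<open>v = A s\<close>.\<close>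

locale linear_gvi = closed_convex_set C for C :: "'a::{real_inner,complete_space} set" +
  fixes A F :: "'a \<Rightarrow> 'a" and lam LA LF :: real and xd :: 'a
  assumes lam_pos: "lam > 0" and A_strongly_monotone: "strongly_monotone lam A"
    and A_lipschitz: "LA-lipschitz_on UNIV A" and F_lipschitz: "LF-lipschitz_on UNIV F"
    and A_F_monotone_couple: "monotone_couple A F"
    and A_linear: "linear A" and A_self_adjoint: "\<forall>u v. A u \<bullet> v = u \<bullet> A v"
    and xd_Sol: "xd \<in> Sol A F C" and xd_selected: "\<forall>s\<in>Sol A F C. xd \<bullet> (A s - A xd) \<ge> 0"
begin

definition L :: real where "L = max LA lam"

definition is_reg_sol :: "real \<Rightarrow> 'a \<Rightarrow> bool" where
  "is_reg_sol a z \<longleftrightarrow> z \<in> Sol A (\<lambda>y. F y + a *\<^sub>R y) C"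

definition reg_sol :: "real \<Rightarrow> 'a" where "reg_sol a = (SOME z. is_reg_sol a z)"

definition energy :: "'a \<Rightarrow> real" where "energy z = A z \<bullet> z"

definition M :: real where "M = L * norm xd / lam"

definition M' :: real where "M' = L * M / lam"

lemma L_pos: "L > 0"
  using lam_pos by (simp add: L_def)

lemma LF_nonneg: "LF \<ge> 0"
  using F_lipschitz by (rule lipschitz_on_nonneg)

lemma M_nonneg: "M \<ge> 0" and M'_nonneg: "M' \<ge> 0"
  using L_pos lam_pos by (auto simp: M_def M'_def)

lemma A_diff: "A (u - v) = A u - A v"
  using A_linear by (rule linear_diff)

lemma A_scale: "A (c *\<^sub>R u) = c *\<^sub>R A u"
  using A_linear by (rule linear_scale)

lemma A_symmetric: "A u \<bullet> v = A v \<bullet> u"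
  using A_self_adjoint by (simp add: inner_commute)

lemma A_norm_le: "norm (A v) \<le> L * norm v"
proof -
  have "norm (A v - A 0) \<le> LA * norm (v - 0)"
    by (rule lipschitz_on_normD[OF A_lipschitz]) auto
  also have "\<dots> \<le> L * norm v"
    unfolding diff_zero by (intro mult_right_mono) (auto simp: L_def)
  finally show ?thesis
    using linear_0[OF A_linear] by simp
qed

lemma A_bounded_linear: "bounded_linear A"
  using A_linear A_norm_le by (auto intro: bounded_linearI' simp: linear_add linear_scale mult.commute
      intro!: bounded_linear_intro[of A L])

lemma A_coercive: "lam * (norm v)\<^sup>2 \<le> A v \<bullet> v"
  using A_strongly_monotone linear_0[OF A_linear] unfolding strongly_monotone_def
  by (metis diff_zero)

lemma A_inner_le: "\<bar>A u \<bullet> v\<bar> \<le> L * norm u * norm v"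
  using Cauchy_Schwarz_ineq2[of "A u" v] A_norm_le[of u] by (meson mult_right_mono norm_ge_zero order_trans)

lemma A_quadratic_le: "A v \<bullet> v \<le> L * (norm v)\<^sup>2"
  using A_inner_le[of v v] by (simp add: power2_eq_square mult.assoc)

lemma lam_norm_le_norm_A: "lam * norm v \<le> norm (A v)"
proof (cases "v = 0")
  case False
  have "lam * norm v * norm v \<le> norm (A v) * norm v"
    using A_coercive[of v] norm_cauchy_schwarz[of "A v" v] by (simp add: power2_eq_square mult.assoc)
  then show ?thesis
    using False by simp
qed simp

lemma F_norm_diff_le: "norm (F u - F v) \<le> LF * norm (u - v)"
  by (rule lipschitz_on_normD[OF F_lipschitz]) auto

lemma A_F_monotone: "A (u - v) \<bullet> (F u - F v) \<ge> 0"
  using A_F_monotone_couple unfolding monotone_couple_def A_diff by blast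

lemma A_surj: "surj A"
proof (rule strongly_monotone_lipschitz_surj[OF lam_pos A_strongly_monotone])
  show "L-lipschitz_on UNIV A"
    using A_lipschitz by (rule lipschitz_on_le) (simp add: L_def)
qed

lemma xd_is_reg_sol: "is_reg_sol 0 xd"
  using xd_Sol by (simp add: is_reg_sol_def)

lemma is_reg_solD:
  assumes "is_reg_sol a z"
  shows "F z + a *\<^sub>R z \<in> C" "y \<in> C \<Longrightarrow> A z \<bullet> (y - (F z + a *\<^sub>R z)) \<ge> 0"
  using assms by (auto simp: is_reg_sol_def Sol_def)

lemma reg_sol_monotone:
  assumes "is_reg_sol a za" "is_reg_sol b zb"
  shows "A (za - zb) \<bullet> (a *\<^sub>R za - b *\<^sub>R zb) \<le> 0"
proof -
  have "A za \<bullet> ((F zb + b *\<^sub>R zb) - (F za + a *\<^sub>R za)) \<ge> 0"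
    "A zb \<bullet> ((F za + a *\<^sub>R za) - (F zb + b *\<^sub>R zb)) \<ge> 0"
    using is_reg_solD[OF assms(1)] is_reg_solD[OF assms(2)] by auto
  then have "A (za - zb) \<bullet> ((F zb + b *\<^sub>R zb) - (F za + a *\<^sub>R za)) \<ge> 0"
    unfolding A_diff by (simp add: inner_diff_left inner_diff_right)
  then show ?thesis
    using A_F_monotone[of za zb] by (simp add: inner_diff_right inner_add_right algebra_simps)
qed

text \<open>In the variable \<open>u = A z\<close>, the regularized problem is a variational inequality for the
  inverse of the strongly monotone map below.\<close>

lemma reg_dual_map_strongly_monotone:
  assumes a: "a > 0"
  shows "strongly_monotone (a * lam / L\<^sup>2) (\<lambda>u. F (inv A u) + a *\<^sub>R inv A u)"
  unfolding strongly_monotone_def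
proof (intro allI)
  fix u v
  define d where "d = inv A u - inv A v"
  have uv: "u - v = A d"
    using A_surj by (simp add: d_def A_diff surj_f_inv_f)
  have "(F (inv A u) + a *\<^sub>R inv A u - (F (inv A v) + a *\<^sub>R inv A v)) \<bullet> (u - v)
      = A d \<bullet> (F (inv A u) - F (inv A v)) + a * (A d \<bullet> d)"
    by (simp add: uv d_def inner_commute algebra_simps inner_diff_right inner_add_right)
  moreover have "A d \<bullet> (F (inv A u) - F (inv A v)) \<ge> 0"
    unfolding d_def by (rule A_F_monotone)
  moreover have "(norm (u - v))\<^sup>2 \<le> (L * norm d)\<^sup>2"
    using A_norm_le[of d] by (intro power_mono) (auto simp: uv)
  then have "a * lam / L\<^sup>2 * (norm (u - v))\<^sup>2 \<le> a * lam / L\<^sup>2 * (L * norm d)\<^sup>2"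
    using a lam_pos by (intro mult_left_mono) auto
  moreover have "a * lam / L\<^sup>2 * (L * norm d)\<^sup>2 \<le> a * (A d \<bullet> d)"
    using A_coercive[of d] a L_pos by (simp add: power_mult_distrib)
  ultimately show "a * lam / L\<^sup>2 * (norm (u - v))\<^sup>2
      \<le> (F (inv A u) + a *\<^sub>R inv A u - (F (inv A v) + a *\<^sub>R inv A v)) \<bullet> (u - v)"
    by linarith
qed

lemma reg_dual_map_lipschitz:
  assumes a: "a > 0"
  shows "((LF + a) / lam)-lipschitz_on UNIV (\<lambda>u. F (inv A u) + a *\<^sub>R inv A u)"
proof (rule lipschitz_onI)
  fix u v
  define d where "d = inv A u - inv A v"
  have "lam * norm d \<le> norm (u - v)"
    using lam_norm_le_norm_A[of d] A_surj by (simp add: d_def A_diff surj_f_inv_f)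
  have "norm (F (inv A u) + a *\<^sub>R inv A u - (F (inv A v) + a *\<^sub>R inv A v))
      = norm ((F (inv A u) - F (inv A v)) + a *\<^sub>R d)"
    by (simp add: d_def algebra_simps)
  also have "\<dots> \<le> LF * norm d + a * norm d"
    using F_norm_diff_le[of "inv A u" "inv A v"] a norm_triangle_le
    by (simp add: d_def norm_triangle_le)
  also have "\<dots> = (LF + a) * norm d"
    by (simp add: algebra_simps)
  also have "\<dots> \<le> (LF + a) * (norm (u - v) / lam)"
    using \<open>lam * norm d \<le> norm (u - v)\<close> lam_pos LF_nonneg a
    by (intro mult_left_mono) (auto simp: field_simps)
  finally show "dist (F (inv A u) + a *\<^sub>R inv A u) (F (inv A v) + a *\<^sub>R inv A v) \<le> (LF + a) / lam * dist u v"
    by (simp add: dist_norm)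
qed (use LF_nonneg a lam_pos in simp)

lemma reg_sol_exists:
  assumes a: "a > 0"
  shows "\<exists>z. is_reg_sol a z"
proof -
  define G where "G = (\<lambda>u. F (inv A u) + a *\<^sub>R inv A u)"
  have "a * lam / L\<^sup>2 > 0"
    using a lam_pos L_pos by simp
  then obtain K mK where GK: "\<And>w. G (K w) = w" and mK: "mK > 0" "strongly_monotone mK K"
      "(1 / (a * lam / L\<^sup>2))-lipschitz_on UNIV K"
    using strongly_monotone_lipschitz_inverse reg_dual_map_strongly_monotone[OF a, folded G_def]
      reg_dual_map_lipschitz[OF a, folded G_def] by blast
  obtain w where w: "w \<in> C" "\<forall>y\<in>C. K w \<bullet> (y - w) \<ge> 0"
    using strongly_monotone_variational_inequality[OF mK] by blast
  define z where "z = inv A (K w)"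
  have "A z = K w"
    using A_surj by (simp add: z_def surj_f_inv_f)
  moreover have "F z + a *\<^sub>R z = w"
    using GK[of w] by (simp add: G_def z_def)
  ultimately show ?thesis
    using w by (auto simp: is_reg_sol_def Sol_def)
qed

lemma is_reg_sol_reg_sol: "a > 0 \<Longrightarrow> is_reg_sol a (reg_sol a)"
  unfolding reg_sol_def using reg_sol_exists by (rule someI_ex)

lemma norm_reg_sol_le:
  assumes "a > 0" "is_reg_sol a z"
  shows "norm z \<le> M"
proof -
  have "a * (A (z - xd) \<bullet> z) \<le> 0"
    using reg_sol_monotone[OF assms(2) xd_is_reg_sol] by simp
  then have "A (z - xd) \<bullet> z \<le> 0"
    using assms(1) by (simp add: mult_le_0_iff)
  then have "A z \<bullet> z \<le> A xd \<bullet> z"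
    by (simp add: A_diff inner_diff_left)
  also have "\<dots> \<le> L * norm xd * norm z"
    using A_inner_le[of xd z] by simp
  finally have "lam * norm z * norm z \<le> L * norm xd * norm z"
    using A_coercive[of z] by (simp add: power2_eq_square mult.assoc)
  then have "lam * norm z \<le> L * norm xd"
    by (cases "z = 0") (auto simp: less_imp_le[OF L_pos] lam_pos)
  then show ?thesis
    using lam_pos by (simp add: M_def pos_le_divide_eq mult.commute)
qed

lemma reg_sol_lipschitz:
  assumes "a > 0" "b > 0" "is_reg_sol a za" "is_reg_sol b zb"
  shows "norm (za - zb) \<le> \<bar>a - b\<bar> * M' / b"
proof -
  define d where "d = za - zb"
  have "a *\<^sub>R za - b *\<^sub>R zb = b *\<^sub>R d + (a - b) *\<^sub>R za"
    by (simp add: d_def algebra_simps)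
  then have "b * (A d \<bullet> d) + (a - b) * (A d \<bullet> za) \<le> 0"
    using reg_sol_monotone[OF assms(3,4)] by (simp add: d_def inner_add_right)
  then have "b * (A d \<bullet> d) \<le> (b - a) * (A d \<bullet> za)"
    by (simp add: algebra_simps)
  also have "\<dots> \<le> \<bar>b - a\<bar> * \<bar>A d \<bullet> za\<bar>"
    by (simp add: abs_mult[symmetric])
  also have "\<dots> \<le> \<bar>a - b\<bar> * (L * norm d * norm za)"
    by (simp add: abs_minus_commute mult_left_mono A_inner_le)
  also have "\<dots> \<le> \<bar>a - b\<bar> * (L * norm d * M)"
    using norm_reg_sol_le[OF assms(1,3)] L_pos by (intro mult_left_mono) auto
  moreover have "b * (lam * (norm d)\<^sup>2) \<le> b * (A d \<bullet> d)"
    using A_coercive[of d] assms(2) by (intro mult_left_mono) auto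
  ultimately have "(b * lam) * norm d * norm d \<le> (\<bar>a - b\<bar> * L * M) * norm d"
    by (simp add: power2_eq_square algebra_simps)
  then have "b * lam * norm d \<le> \<bar>a - b\<bar> * L * M"
    using M_nonneg L_pos by (cases "d = 0") auto
  then have "norm d \<le> \<bar>a - b\<bar> * L * M / (b * lam)"
    using assms(2) lam_pos by (simp add: pos_le_divide_eq mult.commute)
  then show ?thesis
    by (simp add: d_def M'_def field_simps)
qed

lemma reg_sol_energy_decrease:
  assumes "0 \<le> b" "b < a" "is_reg_sol a za" "is_reg_sol b zb"
  shows "lam * (norm (za - zb))\<^sup>2 \<le> energy zb - energy za"
proof -
  define d where "d = za - zb"
  have "a *\<^sub>R za - b *\<^sub>R zb = b *\<^sub>R d + (a - b) *\<^sub>R za"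
    by (simp add: d_def algebra_simps)
  then have "b * (A d \<bullet> d) + (a - b) * (A d \<bullet> za) \<le> 0"
    using reg_sol_monotone[OF assms(3,4)] by (simp add: d_def inner_add_right)
  moreover have "b * (A d \<bullet> d) \<ge> 0"
    using A_coercive[of d] lam_pos assms(1) by (simp add: order_trans[OF _ A_coercive])
  ultimately have "(a - b) * (A d \<bullet> za) \<le> 0"
    by linarith
  then have "A d \<bullet> za \<le> 0"
    using assms(2) by (simp add: mult_le_0_iff)
  moreover have "A d \<bullet> d = energy zb - energy za + 2 * (A d \<bullet> za)"
    unfolding energy_def d_def A_diff
    by (simp add: inner_diff_left inner_diff_right A_symmetric[of zb za])
  ultimately show ?thesis
    using A_coercive[of d] by (simp add: d_def)
qed

lemma tendsto_energy: "(f \<longlongrightarrow> z) net \<Longrightarrow> ((\<lambda>n. energy (f n)) \<longlongrightarrow> energy z) net"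
  unfolding energy_def by (intro tendsto_intros bounded_linear.tendsto[OF A_bounded_linear])

lemma reg_sol_limit_eq_xd:
  assumes b: "b \<longlonglongrightarrow> 0" "\<And>n. b n > 0"
    and z: "\<And>n. is_reg_sol (b n) (z n)" "z \<longlonglongrightarrow> z0"
  shows "z0 = xd"
proof -
  have Az: "(\<lambda>n. A (z n)) \<longlonglongrightarrow> A z0"
    by (rule bounded_linear.tendsto[OF A_bounded_linear z(2)])
  have "isCont F z0"
    using lipschitz_on_continuous_on[OF F_lipschitz] by (simp add: continuous_on_eq_continuous_at)
  then have Fz: "(\<lambda>n. F (z n) + b n *\<^sub>R z n) \<longlonglongrightarrow> F z0 + 0 *\<^sub>R z0"
    by (intro tendsto_intros isCont_tendsto_compose[of z0 F] z(2) b(1))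
  have "F z0 \<in> C"
    using closed_sequentially[OF C_closed _ Fz] is_reg_solD(1)[OF z(1)] by simp
  moreover have "A z0 \<bullet> (y - F z0) \<ge> 0" if y: "y \<in> C" for y
  proof -
    have "(\<lambda>n. A (z n) \<bullet> (y - (F (z n) + b n *\<^sub>R z n))) \<longlonglongrightarrow> A z0 \<bullet> (y - (F z0 + 0 *\<^sub>R z0))"
      by (intro tendsto_intros Az Fz)
    then show ?thesis
      using is_reg_solD(2)[OF z(1) y] by (auto intro!: LIMSEQ_le_const)
  qed
  ultimately have "z0 \<in> Sol A F C"
    by (simp add: Sol_def)
  then have "A (z0 - xd) \<bullet> xd \<ge> 0"
    using xd_selected by (simp add: A_diff inner_commute)
  moreover have "A (z0 - xd) \<bullet> z0 \<le> 0"
  proof (rule LIMSEQ_le_const2)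
    show "(\<lambda>n. A (z n - xd) \<bullet> z n) \<longlonglongrightarrow> A (z0 - xd) \<bullet> z0"
      unfolding A_diff by (intro tendsto_intros Az z(2))
    have "A (z n - xd) \<bullet> z n \<le> 0" for n
      using reg_sol_monotone[OF z(1) xd_is_reg_sol, of n] b(2)[of n] by (simp add: mult_le_0_iff)
    then show "\<exists>N. \<forall>n\<ge>N. A (z n - xd) \<bullet> z n \<le> 0"
      by blast
  qed
  ultimately have "A (z0 - xd) \<bullet> (z0 - xd) \<le> 0"
    by (simp add: inner_diff_right)
  then have "lam * (norm (z0 - xd))\<^sup>2 \<le> 0"
    using A_coercive[of "z0 - xd"] by linarith
  then show ?thesis
    using lam_pos by (simp add: mult_le_0_iff)
qed

lemma reg_sol_seq_Cauchy: "Cauchy (\<lambda>n. reg_sol (1 / Suc n))"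
proof -
  define z where "z n = reg_sol (1 / Suc n)" for n
  have zs: "is_reg_sol (1 / Suc n) (z n)" for n
    using is_reg_sol_reg_sol[of "1 / Suc n"] by (simp add: z_def)
  have energy_step: "lam * (norm (z m - z n))\<^sup>2 \<le> energy (z n) - energy (z m)" if "m \<le> n" for m n
  proof (cases "m = n")
    case False
    then have "1 / real (Suc n) < 1 / Suc m"
      using that by (simp add: field_simps)
    then show ?thesis
      using reg_sol_energy_decrease[OF _ _ zs zs] by simp
  qed simp
  have sq_nonneg: "0 \<le> lam * (norm v)\<^sup>2" for v :: 'a
    using lam_pos by simp
  \<comment> \<open>the energies increase along the sequence and are bounded by that of \<open>xd\<close>\<close>
  have "incseq (\<lambda>n. energy (z n))"
    using energy_step[of _ "Suc _"] sq_nonneg by (intro incseq_SucI) (meson diff_ge_0_iff_ge le_SucI order_refl order_trans)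
  moreover have "energy (z n) \<le> energy xd" for n
    using reg_sol_energy_decrease[OF order_refl _ zs[of n] xd_is_reg_sol] sq_nonneg[of "z n - xd"]
    by simp
  ultimately obtain q where "(\<lambda>n. energy (z n)) \<longlonglongrightarrow> q"
    using incseq_convergent by blast
  then have "Cauchy (\<lambda>n. energy (z n))"
    by (rule LIMSEQ_imp_Cauchy)
  have "Cauchy z"
  proof (rule CauchyI)
    fix e :: real assume e: "e > 0"
    obtain N where N: "\<forall>m\<ge>N. \<forall>n\<ge>N. norm (energy (z m) - energy (z n)) < lam * e\<^sup>2"
      using CauchyD[OF \<open>Cauchy (\<lambda>n. energy (z n))\<close>, of "lam * e\<^sup>2"] e lam_pos by auto
    have "norm (z m - z n) < e" if "m \<ge> N" "n \<ge> N" "m \<le> n" for m n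
    proof -
      have "lam * (norm (z m - z n))\<^sup>2 < lam * e\<^sup>2"
        using energy_step[OF that(3)] N that(1,2) by force
      then show ?thesis
        using lam_pos e by (simp add: power2_less_imp_less)
    qed
    then show "\<exists>M. \<forall>m\<ge>M. \<forall>n\<ge>M. norm (z m - z n) < e"
      by (metis nle_le norm_minus_commute)
  qed
  then show ?thesis
    by (simp add: z_def[abs_def])
qed

lemma reg_sol_seq_tendsto: "(\<lambda>n. reg_sol (1 / Suc n)) \<longlonglongrightarrow> xd"
proof -
  obtain z0 where z0: "(\<lambda>n. reg_sol (1 / Suc n)) \<longlonglongrightarrow> z0"
    using reg_sol_seq_Cauchy Cauchy_convergent_iff convergent_def by blast
  have "(\<lambda>n. 1 / real (Suc n)) \<longlonglongrightarrow> 0"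
    using LIMSEQ_inverse_real_of_nat by (simp add: inverse_eq_divide)
  then have "z0 = xd"
    by (rule reg_sol_limit_eq_xd[OF _ _ is_reg_sol_reg_sol z0]) simp_all
  then show ?thesis
    using z0 by simp
qed

lemma reg_sol_tendsto: "(reg_sol \<longlongrightarrow> xd) (at_right 0)"
proof (rule tendstoI)
  fix e :: real assume e: "e > 0"
  \<comment> \<open>the energy increases as \<open>a \<rightarrow> 0\<close> and is bounded by that of \<open>xd\<close>; its deficit controls the distance\<close>
  have "(\<lambda>n. energy (reg_sol (1 / Suc n))) \<longlonglongrightarrow> energy xd"
    by (rule tendsto_energy[OF reg_sol_seq_tendsto])
  moreover have "energy xd - lam * e\<^sup>2 < energy xd"
    using lam_pos e by simp
  ultimately obtain N where N: "energy xd - lam * e\<^sup>2 < energy (reg_sol (1 / Suc N))"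
    by (metis (no_types, lifting) eventually_sequentially order_tendstoD(1) order_refl)
  have "eventually (\<lambda>a. 0 < a \<and> a < 1 / Suc N) (at_right 0)"
    unfolding eventually_at_right_field by (intro exI[of _ "1 / Suc N"]) simp
  then show "eventually (\<lambda>a. dist (reg_sol a) xd < e) (at_right 0)"
  proof eventually_elim
    case (elim a)
    then have a: "0 < a" "a < 1 / Suc N"
      by simp_all
    have "lam * (norm (reg_sol (1 / Suc N) - reg_sol a))\<^sup>2
        \<le> energy (reg_sol a) - energy (reg_sol (1 / Suc N))"
      using reg_sol_energy_decrease[OF less_imp_le[OF a(1)] a(2)
          is_reg_sol_reg_sol[of "1 / Suc N"] is_reg_sol_reg_sol[OF a(1)]]
      by simp
    then have "energy (reg_sol (1 / Suc N)) \<le> energy (reg_sol a)"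
      using lam_pos by (smt (verit) mult_nonneg_nonneg zero_le_power2)
    moreover have "lam * (norm (reg_sol a - xd))\<^sup>2 \<le> energy xd - energy (reg_sol a)"
      using reg_sol_energy_decrease[OF order_refl a(1) is_reg_sol_reg_sol[OF a(1)] xd_is_reg_sol] .
    ultimately have "lam * (norm (reg_sol a - xd))\<^sup>2 < lam * e\<^sup>2"
      using N by linarith
    then show "dist (reg_sol a) xd < e"
      using lam_pos e by (simp add: dist_norm power2_less_imp_less)
  qed
qed

lemma energy_diff_le:
  assumes "norm w \<le> \<beta>"
  shows "energy (u - w) \<le> energy u + 2 * L * norm u * \<beta> + L * \<beta>\<^sup>2"
proof -
  have "energy (u - w) = energy u - 2 * (A u \<bullet> w) + energy w"
    by (simp add: energy_def A_diff inner_diff_left inner_diff_right A_symmetric[of w u])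
  moreover have "- (A u \<bullet> w) \<le> L * norm u * norm w"
    using A_inner_le[of u w] by linarith
  moreover have "L * norm u * norm w \<le> L * norm u * \<beta>"
    using assms L_pos by (intro mult_left_mono) auto
  moreover have "energy w \<le> L * (norm w)\<^sup>2"
    unfolding energy_def by (rule A_quadratic_le)
  moreover have "L * (norm w)\<^sup>2 \<le> L * \<beta>\<^sup>2"
    using assms L_pos by (intro mult_left_mono power_mono) auto
  ultimately show ?thesis
    by linarith
qed

lemma energy_diff_eq: "energy v - energy u = A (v - u) \<bullet> (v + u)"
  by (simp add: energy_def A_diff inner_diff_left inner_add_right A_symmetric[of u v])

lemma has_field_derivative_energy:
  assumes "(y has_vector_derivative v) (at t)"
  shows "((\<lambda>s. energy (y s - c)) has_field_derivative 2 * (A (y t - c) \<bullet> v)) (at t)"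
proof -
  have hw: "((\<lambda>s. y s - c) has_derivative (\<lambda>h. h *\<^sub>R v)) (at t)"
    using has_derivative_diff[OF assms[unfolded has_vector_derivative_def] has_derivative_const[of c]]
    by simp
  have "((\<lambda>s. A (y s - c) \<bullet> (y s - c)) has_derivative
      (\<lambda>h. A (y t - c) \<bullet> (h *\<^sub>R v) + A (h *\<^sub>R v) \<bullet> (y t - c))) (at t)"
    by (rule has_derivative_inner[OF bounded_linear.has_derivative[OF A_bounded_linear hw] hw])
  moreover have "(\<lambda>h. A (y t - c) \<bullet> (h *\<^sub>R v) + A (h *\<^sub>R v) \<bullet> (y t - c)) = (*) (2 * (A (y t - c) \<bullet> v))"
    by (rule ext) (simp add: A_scale A_symmetric[of v] A_diff inner_diff_left algebra_simps)
  ultimately show ?thesis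
    by (simp add: has_field_derivative_def energy_def)
qed

lemma reg_sol_projection_step:
  assumes m: "m > 0" and z: "is_reg_sol a z"
  shows "m * (A (y - z) \<bullet> (metric_proj C ((F y + a *\<^sub>R y) - m *\<^sub>R A y) - (F z + a *\<^sub>R z)))
    \<le> (norm ((F y + a *\<^sub>R y) - (F z + a *\<^sub>R z)))\<^sup>2 / 4"
proof -
  define D where "D = (F y + a *\<^sub>R y) - (F z + a *\<^sub>R z)"
  define r where "r = metric_proj C ((F y + a *\<^sub>R y) - m *\<^sub>R A y) - (F z + a *\<^sub>R z)"
  have fixed: "metric_proj C ((F z + a *\<^sub>R z) - m *\<^sub>R A z) = F z + a *\<^sub>R z"
  proof (rule metric_proj_eqI[OF is_reg_solD(1)[OF z]], intro ballI)
    fix w assume "w \<in> C"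
    then have "A z \<bullet> (w - (F z + a *\<^sub>R z)) \<ge> 0"
      by (rule is_reg_solD(2)[OF z])
    then show "((F z + a *\<^sub>R z) - m *\<^sub>R A z - (F z + a *\<^sub>R z)) \<bullet> (w - (F z + a *\<^sub>R z)) \<le> 0"
      using m by simp
  qed
  \<comment> \<open>firm nonexpansiveness of the projection, compared at \<open>y\<close> and at the fixed point \<open>z\<close>\<close>
  have "((F y + a *\<^sub>R y) - m *\<^sub>R A y) - ((F z + a *\<^sub>R z) - m *\<^sub>R A z) = D - m *\<^sub>R A (y - z)"
    by (simp add: D_def A_diff algebra_simps)
  then have "(norm r)\<^sup>2 \<le> (D - m *\<^sub>R A (y - z)) \<bullet> r"
    using metric_proj_firmly_nonexpansive[of "(F y + a *\<^sub>R y) - m *\<^sub>R A y" "(F z + a *\<^sub>R z) - m *\<^sub>R A z"]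
    unfolding fixed by (simp add: r_def)
  then have "m * (A (y - z) \<bullet> r) \<le> D \<bullet> r - r \<bullet> r"
    by (simp add: inner_diff_left power2_norm_eq_inner)
  also have "\<dots> \<le> (norm D)\<^sup>2 / 4"
    by (rule inner_minus_inner_self_le)
  finally show ?thesis
    by (simp add: D_def r_def)
qed

lemma lyapunov_estimate:
  assumes a: "a > 0" and m: "m > 0" and z: "is_reg_sol a z"
  shows "A (y - z) \<bullet> (metric_proj C ((F y + a *\<^sub>R y) - m *\<^sub>R A y) - (F y + a *\<^sub>R y))
    \<le> ((LF + a)\<^sup>2 / (4 * m) - a * lam) * (norm (y - z))\<^sup>2"
proof -
  define e where "e = y - z"
  define D where "D = (F y + a *\<^sub>R y) - (F z + a *\<^sub>R z)"
  define r where "r = metric_proj C ((F y + a *\<^sub>R y) - m *\<^sub>R A y) - (F z + a *\<^sub>R z)"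
  have Aer: "A e \<bullet> r \<le> (norm D)\<^sup>2 / (4 * m)"
    using reg_sol_projection_step[OF m z, of y] m by (simp add: e_def D_def r_def field_simps)
  have D_eq: "D = (F y - F z) + a *\<^sub>R e"
    by (simp add: D_def e_def algebra_simps)
  have "a * (lam * (norm e)\<^sup>2) \<le> a * (A e \<bullet> e)"
    using A_coercive[of e] a by (intro mult_left_mono) auto
  then have AeD: "a * lam * (norm e)\<^sup>2 \<le> A e \<bullet> D"
    using A_F_monotone[of y z] unfolding D_eq by (simp add: inner_add_right e_def)
  have "norm D \<le> LF * norm e + a * norm e"
    unfolding D_eq using F_norm_diff_le[of y z] norm_triangle_ineq[of "F y - F z" "a *\<^sub>R e"] a
    by (simp add: e_def)
  then have "(norm D)\<^sup>2 \<le> ((LF + a) * norm e)\<^sup>2"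
    by (intro power_mono) (auto simp: algebra_simps)
  then have ND: "(norm D)\<^sup>2 / (4 * m) \<le> (LF + a)\<^sup>2 * (norm e)\<^sup>2 / (4 * m)"
    using m by (simp add: divide_right_mono power_mult_distrib)
  have "metric_proj C ((F y + a *\<^sub>R y) - m *\<^sub>R A y) - (F y + a *\<^sub>R y) = r - D"
    by (simp add: r_def D_def)
  then have "A (y - z) \<bullet> (metric_proj C ((F y + a *\<^sub>R y) - m *\<^sub>R A y) - (F y + a *\<^sub>R y))
      = A e \<bullet> r - A e \<bullet> D"
    by (simp add: e_def inner_diff_right)
  also have "\<dots> \<le> (LF + a)\<^sup>2 * (norm e)\<^sup>2 / (4 * m) - a * lam * (norm e)\<^sup>2"
    using Aer AeD ND by linarith
  also have "\<dots> = ((LF + a)\<^sup>2 / (4 * m) - a * lam) * (norm (y - z))\<^sup>2"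
    by (simp add: e_def algebra_simps)
  finally show ?thesis .
qed

end

section \<open>The regularized projection flow\<close>

locale tikhonov_flow = linear_gvi +
  fixes \<alpha> \<alpha>' \<mu> :: "real \<Rightarrow> real" and x :: "real \<Rightarrow> 'a" and x0 :: 'a
  assumes \<alpha>_pos: "\<forall>t\<ge>0. \<alpha> t > 0"
    and \<alpha>_deriv: "\<forall>t\<ge>0. (\<alpha> has_real_derivative \<alpha>' t) (at t within {0..})"
    and \<alpha>'_cont: "continuous_on {0..} \<alpha>'"
    and \<mu>_pos: "\<forall>t\<ge>0. \<mu> t > 0"
    and \<alpha>_tendsto_0: "(\<alpha> \<longlongrightarrow> 0) at_top"
    and \<alpha>_mult_\<mu>_tendsto: "filterlim (\<lambda>t. \<alpha> t * \<mu> t) at_top at_top"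
    and \<alpha>'_div_\<alpha>_sq_tendsto_0: "((\<lambda>t. \<alpha>' t / (\<alpha> t)\<^sup>2) \<longlongrightarrow> 0) at_top"
    and \<alpha>_integral_unbounded: "filterlim (\<lambda>T. integral {0..T} \<alpha>) at_top at_top"
    and x_solution: "strong_global_solution
      (\<lambda>t y. metric_proj C ((F y + \<alpha> t *\<^sub>R y) - \<mu> t *\<^sub>R A y) - (F y + \<alpha> t *\<^sub>R y)) x0 x"
begin

definition z :: "real \<Rightarrow> 'a" where "z t = reg_sol (\<alpha> t)"

definition e :: "real \<Rightarrow> 'a" where "e t = x t - z t"

definition V :: "real \<Rightarrow> real" where "V t = energy (e t)"

definition xdot :: "real \<Rightarrow> 'a" where
  "xdot t = metric_proj C ((F (x t) + \<alpha> t *\<^sub>R x t) - \<mu> t *\<^sub>R A (x t)) - (F (x t) + \<alpha> t *\<^sub>R x t)"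

definition dini_bound :: "real \<Rightarrow> real" where
  "dini_bound t = 2 * (A (e t) \<bullet> xdot t) + 2 * L * norm (e t) * M' * \<bar>\<alpha>' t\<bar> / \<alpha> t"

definition \<kappa> :: real where "\<kappa> = lam / (2 * L)"

definition weight :: "real \<Rightarrow> real \<Rightarrow> real" where
  "weight t1 s = exp (\<kappa> * (integral {0..s} \<alpha> - integral {0..t1} \<alpha>))"

lemma \<kappa>_pos: "\<kappa> > 0"
  using lam_pos L_pos by (simp add: \<kappa>_def)

lemma \<alpha>_has_real_derivative:
  assumes "t > 0"
  shows "(\<alpha> has_real_derivative \<alpha>' t) (at t)"
proof -
  have "(\<alpha> has_real_derivative \<alpha>' t) (at t within {0..})"
    using \<alpha>_deriv assms by simp
  moreover have "at t within {0..} = at t"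
    using assms by (intro at_within_interior) simp
  ultimately show ?thesis
    by simp
qed

lemma \<alpha>_continuous_on: "continuous_on {0..} \<alpha>"
  using \<alpha>_deriv by (metis DERIV_continuous atLeast_iff continuous_on_eq_continuous_within)

lemma z_is_reg_sol: "t \<ge> 0 \<Longrightarrow> is_reg_sol (\<alpha> t) (z t)"
  using is_reg_sol_reg_sol \<alpha>_pos by (simp add: z_def)

lemma norm_z_le: "s \<ge> 0 \<Longrightarrow> norm (z s) \<le> M"
  using norm_reg_sol_le[OF _ z_is_reg_sol] \<alpha>_pos by simp

lemma norm_z_diff_le: "t \<ge> 0 \<Longrightarrow> s \<ge> 0 \<Longrightarrow> norm (z t - z s) \<le> \<bar>\<alpha> t - \<alpha> s\<bar> * M' / \<alpha> s"
  using reg_sol_lipschitz[OF _ _ z_is_reg_sol z_is_reg_sol] \<alpha>_pos by simp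

lemma x_abs_cont_on: "T \<ge> 0 \<Longrightarrow> abs_cont_on 0 T x"
  using x_solution unfolding strong_global_solution_def by blast

lemma x_has_derivative_ae:
  obtains N where "negligible N" "\<And>t. t \<ge> 0 \<Longrightarrow> t \<notin> N \<Longrightarrow> (x has_vector_derivative xdot t) (at t)"
proof -
  have "AE t in lborel. t \<ge> 0 \<longrightarrow> (x has_vector_derivative xdot t) (at t)"
    using x_solution unfolding strong_global_solution_def xdot_def by simp
  then obtain N where N: "{t \<in> space lborel. \<not> (t \<ge> 0 \<longrightarrow> (x has_vector_derivative xdot t) (at t))} \<subseteq> N"
      "N \<in> null_sets lborel"
    by (auto elim!: AE_E simp: null_sets_def)
  then have "negligible N"
    by (simp add: negligible_iff_null_sets null_sets_completionI)
  then show thesis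
    using that N(1) by auto
qed

lemma V_upper_dini:
  assumes t: "t > 0" and x': "(x has_vector_derivative xdot t) (at t)" and \<eta>: "\<eta> > 0"
  shows "eventually (\<lambda>s. V s - V t \<le> (dini_bound t + \<eta>) * (s - t)) (at_right t)"
proof -
  \<comment> \<open>freeze \<open>z\<close> at time \<open>t\<close>; its motion is controlled by the Lipschitz bound on \<open>reg_sol\<close>\<close>
  define c where "c = z t"
  define g where "g s = energy (x s - c)" for s
  define q where "q s = \<bar>(\<alpha> s - \<alpha> t) / (s - t)\<bar> * M' / \<alpha> s" for s
  define \<beta> where "\<beta> s = \<bar>\<alpha> s - \<alpha> t\<bar> * M' / \<alpha> s" for s
  define R where "R s = (g s - g t) / (s - t) + 2 * L * norm (x s - c) * q s + L * \<beta> s * q s" for s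
  have "eventually (\<lambda>s. V s - V t \<le> (s - t) * R s) (at_right t)"
    using eventually_at_right_less[of t]
  proof eventually_elim
    case (elim s)
    have "norm (z s - c) \<le> \<beta> s"
      using norm_z_diff_le[of t s] elim t by (simp add: c_def \<beta>_def norm_minus_commute abs_minus_commute)
    then have "V s \<le> g s + 2 * L * norm (x s - c) * \<beta> s + L * (\<beta> s)\<^sup>2"
      using energy_diff_le[of "z s - c" "\<beta> s" "x s - c"] by (simp add: V_def e_def g_def)
    moreover have "\<beta> s = (s - t) * q s"
      using elim by (simp add: \<beta>_def q_def abs_divide)
    then have "(s - t) * R s = g s - g t + 2 * L * norm (x s - c) * \<beta> s + L * (\<beta> s)\<^sup>2"
      using elim by (simp add: R_def distrib_left power2_eq_square mult.left_commute)
    moreover have "g t = V t"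
      by (simp add: g_def V_def e_def c_def)
    ultimately show ?case
      by linarith
  qed
  moreover have "(R \<longlongrightarrow> dini_bound t) (at_right t)"
  proof -
    have "((\<lambda>s. (g s - g t) / (s - t)) \<longlongrightarrow> 2 * (A (e t) \<bullet> xdot t)) (at_right t)"
      using has_field_derivativeD[OF has_field_derivative_energy[OF x', of c]] filterlim_at_split
      by (auto simp: g_def e_def c_def)
    moreover have "((\<lambda>s. x s - c) \<longlongrightarrow> e t) (at_right t)"
      using has_vector_derivative_continuous[OF x'] filterlim_at_split unfolding isCont_def
      by (auto simp: e_def c_def intro!: tendsto_intros)
    moreover have \<alpha>_lim: "(\<alpha> \<longlongrightarrow> \<alpha> t) (at_right t)"
      using DERIV_isCont[OF \<alpha>_has_real_derivative[OF t]] filterlim_at_split unfolding isCont_def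
      by blast
    moreover have "((\<lambda>s. (\<alpha> s - \<alpha> t) / (s - t)) \<longlongrightarrow> \<alpha>' t) (at_right t)"
      using has_field_derivativeD[OF \<alpha>_has_real_derivative[OF t]] filterlim_at_split by blast
    ultimately have "(R \<longlongrightarrow> 2 * (A (e t) \<bullet> xdot t) + 2 * L * norm (e t) * (\<bar>\<alpha>' t\<bar> * M' / \<alpha> t)
        + L * (\<bar>\<alpha> t - \<alpha> t\<bar> * M' / \<alpha> t) * (\<bar>\<alpha>' t\<bar> * M' / \<alpha> t)) (at_right t)"
      unfolding R_def q_def \<beta>_def using \<alpha>_pos t by (intro tendsto_intros) (auto simp: less_imp_neq[symmetric])
    then show ?thesis
      by (simp add: dini_bound_def mult_ac)
  qed
  ultimately show ?thesis
    using upper_dini_le_of_quotient[OF _ _ \<eta>] by blast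
qed

lemma dini_bound_le:
  assumes t: "t > 0"
    and \<mu>_large: "(LF + \<alpha> t)\<^sup>2 \<le> 2 * lam * \<alpha> t * \<mu> t"
    and \<alpha>'_small: "2 * L\<^sup>2 * M'\<^sup>2 / lam * (\<alpha>' t / (\<alpha> t)\<^sup>2)\<^sup>2 \<le> \<kappa> * \<epsilon>"
  shows "dini_bound t \<le> - \<kappa> * \<alpha> t * (V t - \<epsilon>)"
proof -
  define a where "a = \<alpha> t"
  define m where "m = \<mu> t"
  define X where "X = norm (e t)"
  define Y where "Y = L * M' * a * \<bar>\<alpha>' t / a\<^sup>2\<bar>"
  have a: "a > 0" and m: "m > 0"
    using \<alpha>_pos \<mu>_pos t by (simp_all add: a_def m_def)
  have "(LF + a)\<^sup>2 / (4 * m) \<le> (2 * lam * a * m) / (4 * m)"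
    using \<mu>_large m by (intro divide_right_mono) (auto simp: a_def m_def)
  also have "\<dots> = a * lam / 2"
    using m by simp
  finally have "((LF + a)\<^sup>2 / (4 * m) - a * lam) * X\<^sup>2 \<le> - (a * lam / 2) * X\<^sup>2"
    by (intro mult_right_mono) auto
  moreover have "is_reg_sol a (z t)"
    using z_is_reg_sol[of t] t by (simp add: a_def)
  ultimately have proj_term: "A (e t) \<bullet> xdot t \<le> - (a * lam / 2) * X\<^sup>2"
    using lyapunov_estimate[OF a m, of "z t" "x t"] by (simp add: xdot_def e_def X_def a_def m_def)
  \<comment> \<open>Young's inequality absorbs the drift of \<open>z\<close> into half of the dissipation\<close>
  have "Y\<^sup>2 / (a * lam / 2) = a * (2 * L\<^sup>2 * M'\<^sup>2 / lam * (\<alpha>' t / a\<^sup>2)\<^sup>2)"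
    using a lam_pos by (simp add: Y_def power2_eq_square field_simps)
  also have "\<dots> \<le> a * (\<kappa> * \<epsilon>)"
    using \<alpha>'_small a by (intro mult_left_mono) (auto simp: a_def)
  finally have Y_le: "Y\<^sup>2 / (a * lam / 2) \<le> a * (\<kappa> * \<epsilon>)" .
  have "2 * L * norm (e t) * M' * \<bar>\<alpha>' t\<bar> / \<alpha> t = 2 * X * Y"
    using a by (simp add: X_def Y_def a_def[symmetric] abs_divide power2_eq_square field_simps)
  also have "\<dots> \<le> (a * lam / 2) * X\<^sup>2 + Y\<^sup>2 / (a * lam / 2)"
    using a lam_pos by (intro two_mult_le_weighted_squares) simp
  finally have drift_term: "2 * L * norm (e t) * M' * \<bar>\<alpha>' t\<bar> / \<alpha> t \<le> (a * lam / 2) * X\<^sup>2 + a * (\<kappa> * \<epsilon>)"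
    using Y_le by linarith
  have "\<kappa> * a * V t \<le> \<kappa> * a * (L * X\<^sup>2)"
    using A_quadratic_le[of "e t"] \<kappa>_pos a by (intro mult_left_mono) (auto simp: V_def energy_def X_def)
  also have "\<dots> = (a * lam / 2) * X\<^sup>2"
    using L_pos by (simp add: \<kappa>_def field_simps)
  finally have "\<kappa> * a * V t \<le> (a * lam / 2) * X\<^sup>2" .
  then have "dini_bound t \<le> - \<kappa> * a * V t + a * (\<kappa> * \<epsilon>)"
    using proj_term drift_term unfolding dini_bound_def by linarith
  then show ?thesis
    by (simp add: a_def algebra_simps)
qed

lemma eventually_dini_bound_le:
  assumes "\<epsilon> > 0"
  shows "eventually (\<lambda>t. dini_bound t \<le> - \<kappa> * \<alpha> t * (V t - \<epsilon>)) at_top"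
proof -
  have "eventually (\<lambda>t. \<alpha> t < 1) at_top"
    using order_tendstoD(2)[OF \<alpha>_tendsto_0] by simp
  moreover have "eventually (\<lambda>t. (LF + 1)\<^sup>2 / (2 * lam) \<le> \<alpha> t * \<mu> t) at_top"
    using \<alpha>_mult_\<mu>_tendsto unfolding filterlim_at_top by blast
  moreover have "((\<lambda>t. 2 * L\<^sup>2 * M'\<^sup>2 / lam * (\<alpha>' t / (\<alpha> t)\<^sup>2)\<^sup>2) \<longlongrightarrow> 2 * L\<^sup>2 * M'\<^sup>2 / lam * 0\<^sup>2) at_top"
    by (intro tendsto_intros \<alpha>'_div_\<alpha>_sq_tendsto_0)
  then have "eventually (\<lambda>t. 2 * L\<^sup>2 * M'\<^sup>2 / lam * (\<alpha>' t / (\<alpha> t)\<^sup>2)\<^sup>2 < \<kappa> * \<epsilon>) at_top"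
    using order_tendstoD(2) \<kappa>_pos assms by fastforce
  moreover have "eventually (\<lambda>t::real. t \<ge> 1) at_top"
    by (rule eventually_ge_at_top)
  ultimately show ?thesis
  proof eventually_elim
    case (elim t)
    have "\<alpha> t > 0"
      using \<alpha>_pos elim by simp
    then have "(LF + \<alpha> t)\<^sup>2 \<le> (LF + 1)\<^sup>2"
      using elim LF_nonneg by (intro power_mono) auto
    also have "\<dots> \<le> 2 * lam * (\<alpha> t * \<mu> t)"
      using elim lam_pos by (simp add: field_simps)
    finally show ?case
      using elim by (intro dini_bound_le) (auto simp: mult.assoc)
  qed
qed

lemma z_lipschitz_on:
  assumes t1: "0 < t1" "t1 \<le> T"
  shows "\<exists>K. K-lipschitz_on {t1..T} z"
proof -
  have "(\<alpha> has_real_derivative \<alpha>' s) (at s within {t1..T})" if "s \<in> {t1..T}" for s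
  proof (rule DERIV_subset)
    show "(\<alpha> has_real_derivative \<alpha>' s) (at s within {0..})"
      using \<alpha>_deriv that t1 by simp
  qed (use t1 in auto)
  moreover have "continuous_on {t1..T} \<alpha>'"
    using \<alpha>'_cont by (rule continuous_on_subset) (use t1 in auto)
  ultimately obtain K\<alpha> where K\<alpha>: "K\<alpha>-lipschitz_on {t1..T} \<alpha>"
    using C1_imp_lipschitz_on by blast
  have "continuous_on {t1..T} \<alpha>"
    using \<alpha>_continuous_on by (rule continuous_on_subset) (use t1 in auto)
  moreover have "{t1..T} \<noteq> {}"
    using t1 by simp
  ultimately obtain m where m: "m \<in> {t1..T}" "\<forall>s\<in>{t1..T}. \<alpha> m \<le> \<alpha> s"
    using continuous_attains_inf[OF compact_Icc] by blast
  have m_pos: "\<alpha> m > 0"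
    using \<alpha>_pos m t1 by simp
  have "(K\<alpha> * M' / \<alpha> m)-lipschitz_on {t1..T} z"
  proof (rule lipschitz_onI)
    fix u v assume u: "u \<in> {t1..T}" and v: "v \<in> {t1..T}"
    have "norm (z u - z v) \<le> \<bar>\<alpha> u - \<alpha> v\<bar> * M' / \<alpha> v"
      using norm_z_diff_le u v t1 by simp
    also have "\<dots> \<le> (K\<alpha> * dist u v) * M' / \<alpha> m"
    proof (rule frac_le)
      show "\<bar>\<alpha> u - \<alpha> v\<bar> * M' \<le> K\<alpha> * dist u v * M'"
        using lipschitz_onD[OF K\<alpha> u v] M'_nonneg by (intro mult_right_mono) (auto simp: dist_real_def)
      show "0 \<le> K\<alpha> * dist u v * M'"
        using lipschitz_on_nonneg[OF K\<alpha>] M'_nonneg by simp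
    qed (use m v m_pos in auto)
    finally show "dist (z u) (z v) \<le> K\<alpha> * M' / \<alpha> m * dist u v"
      by (simp add: dist_norm mult_ac)
  qed (use lipschitz_on_nonneg[OF K\<alpha>] M'_nonneg m_pos in simp)
  then show ?thesis
    by blast
qed

lemma V_abs_cont_on:
  assumes t1: "0 < t1" "t1 \<le> T"
  shows "abs_cont_on t1 T V"
proof -
  have x_ac: "abs_cont_on t1 T x"
    using abs_cont_on_subinterval[OF x_abs_cont_on[of T]] t1 by simp
  obtain Rx where Rx: "\<And>s. s \<in> {t1..T} \<Longrightarrow> norm (x s) \<le> Rx"
    using continuous_on_compact_bound[OF compact_Icc abs_cont_on_imp_continuous_on[OF x_ac]] by blast
  obtain Kz where Kz: "Kz-lipschitz_on {t1..T} z"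
    using z_lipschitz_on[OF t1] by blast
  have e_le: "norm (e s) \<le> Rx + M" if "s \<in> {t1..T}" for s
    using norm_triangle_ineq4[of "x s" "z s"] Rx[OF that] norm_z_le[of s] that t1
    by (simp add: e_def)
  have "0 \<le> Rx + M"
    using e_le[of t1] t1 norm_ge_zero[of "e t1"] by (simp del: norm_ge_zero)
  show ?thesis
  proof (rule abs_cont_on_dominated[OF x_ac abs_cont_on_id])
    show "2 * L * (Rx + M) * max 1 Kz \<ge> 0"
      using L_pos \<open>0 \<le> Rx + M\<close> by simp
    fix u v assume u: "u \<in> {t1..T}" and v: "v \<in> {t1..T}"
    have "norm (e v - e u) \<le> norm (x v - x u) + Kz * norm (v - u)"
      using norm_triangle_ineq4[of "x v - x u" "z v - z u"] lipschitz_on_normD[OF Kz v u]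
      by (simp add: e_def algebra_simps)
    also have "\<dots> \<le> max 1 Kz * (norm (x v - x u) + norm (v - u))"
      using mult_right_mono[of 1 "max 1 Kz" "norm (x v - x u)"]
        mult_right_mono[of Kz "max 1 Kz" "norm (v - u)"]
      by (simp add: distrib_left)
    finally have de: "norm (e v - e u) \<le> max 1 Kz * (norm (x v - x u) + norm (v - u))" .
    have "norm (e v + e u) \<le> norm (e v) + norm (e u)"
      by (rule norm_triangle_ineq)
    also have "\<dots> \<le> 2 * (Rx + M)"
      using e_le[OF u] e_le[OF v] by simp
    finally have "norm (e v + e u) \<le> 2 * (Rx + M)" .
    have "norm (V v - V u) = \<bar>A (e v - e u) \<bullet> (e v + e u)\<bar>"
      by (simp add: V_def energy_diff_eq)
    also have "\<dots> \<le> L * norm (e v - e u) * norm (e v + e u)"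
      by (rule A_inner_le)
    also have "\<dots> \<le> L * (max 1 Kz * (norm (x v - x u) + norm (v - u))) * (2 * (Rx + M))"
      using de \<open>norm (e v + e u) \<le> 2 * (Rx + M)\<close> L_pos by (intro mult_mono mult_left_mono) auto
    finally show "norm (V v - V u) \<le> 2 * L * (Rx + M) * max 1 Kz * (norm (x v - x u) + norm (v - u))"
      by (simp add: algebra_simps)
  qed
qed

lemma weight_pos: "weight t1 s > 0"
  by (simp add: weight_def)

lemma weight_has_real_derivative:
  assumes s: "s > 0"
  shows "(weight t1 has_real_derivative \<kappa> * \<alpha> s * weight t1 s) (at s)"
proof -
  have "continuous_on {0..s + 1} \<alpha>"
    using \<alpha>_continuous_on by (rule continuous_on_subset) auto
  then have "((\<lambda>s. integral {0..s} \<alpha>) has_real_derivative \<alpha> s) (at s within {0..s + 1})"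
    by (rule integral_has_real_derivative) (use s in auto)
  moreover have "at s within {0..s + 1} = at s"
    using s by (intro at_within_interior) auto
  ultimately have "((\<lambda>s. integral {0..s} \<alpha>) has_real_derivative \<alpha> s) (at s)"
    by simp
  then have "((\<lambda>s. exp (\<kappa> * (integral {0..s} \<alpha> - integral {0..t1} \<alpha>))) has_real_derivative
      exp (\<kappa> * (integral {0..s} \<alpha> - integral {0..t1} \<alpha>)) * (\<kappa> * (\<alpha> s - 0))) (at s)"
    by (intro DERIV_chain2[OF DERIV_exp] DERIV_cmult DERIV_diff DERIV_const)
  then show ?thesis
    by (simp add: weight_def[abs_def] algebra_simps)
qed

lemma weight_abs_cont_on:
  assumes t1: "0 < t1" "t1 \<le> T"
  shows "abs_cont_on t1 T (weight t1)"
proof -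
  have "continuous_on {t1..T} (weight t1)"
  proof (intro continuous_at_imp_continuous_on ballI)
    fix s assume "s \<in> {t1..T}"
    then have "s > 0"
      using t1 by simp
    then show "isCont (weight t1) s"
      by (rule DERIV_isCont[OF weight_has_real_derivative])
  qed
  moreover have "continuous_on {t1..T} \<alpha>"
    using \<alpha>_continuous_on by (rule continuous_on_subset) (use t1 in auto)
  ultimately have "continuous_on {t1..T} (\<lambda>s. \<kappa> * \<alpha> s * weight t1 s)"
    by (intro continuous_intros)
  moreover have "(weight t1 has_real_derivative \<kappa> * \<alpha> s * weight t1 s) (at s within {t1..T})"
    if "s \<in> {t1..T}" for s
    using weight_has_real_derivative[of s] that t1 by (auto intro: has_field_derivative_at_within)
  ultimately obtain K where "K-lipschitz_on {t1..T} (weight t1)"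
    using C1_imp_lipschitz_on[of t1 T "weight t1" "\<lambda>s. \<kappa> * \<alpha> s * weight t1 s"] by blast
  then show ?thesis
    by (rule lipschitz_on_imp_abs_cont_on)
qed

lemma weighted_V_nonincreasing:
  assumes t1: "0 < t1" "t1 \<le> T"
    and bound: "\<And>t. t1 \<le> t \<Longrightarrow> dini_bound t \<le> - \<kappa> * \<alpha> t * (V t - \<epsilon>)"
  shows "(V T - \<epsilon>) * weight t1 T \<le> V t1 - \<epsilon>"
proof -
  obtain N where N: "negligible N" "\<And>t. t \<ge> 0 \<Longrightarrow> t \<notin> N \<Longrightarrow> (x has_vector_derivative xdot t) (at t)"
    using x_has_derivative_ae by blast
  have "abs_cont_on t1 T (\<lambda>u. V u - \<epsilon>)"
    by (rule abs_cont_on_dominated[OF V_abs_cont_on[OF t1] V_abs_cont_on[OF t1], of 1]) auto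
  then have ac: "abs_cont_on t1 T (\<lambda>u. (V u - \<epsilon>) * weight t1 u)"
    by (intro abs_cont_on_mult weight_abs_cont_on t1)
  have "(V T - \<epsilon>) * weight t1 T \<le> (V t1 - \<epsilon>) * weight t1 t1"
  proof (rule abs_cont_on_nonincreasing[OF t1(2) ac N(1)])
    fix s \<eta> :: real assume s: "s \<in> {t1..<T}" "s \<notin> N" and \<eta>: "\<eta> > 0"
    have s0: "s > 0"
      using s t1 by simp
    \<comment> \<open>the growth rate \<open>\<kappa> \<alpha> s\<close> of the weight compensates the decay bound for \<open>V\<close>\<close>
    have "(dini_bound s + \<kappa> * \<alpha> s * (V s - \<epsilon>)) * weight t1 s \<le> 0"
      using bound[of s] s weight_pos[of t1 s] by (intro mult_nonpos_nonneg) auto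
    then have rate: "dini_bound s * weight t1 s + (V s - \<epsilon>) * (\<kappa> * \<alpha> s * weight t1 s) \<le> 0"
      by (simp add: algebra_simps)
    have "eventually (\<lambda>u. (V u - \<epsilon>) - (V s - \<epsilon>) \<le> (dini_bound s + \<eta>') * (u - s)) (at_right s)"
      if "\<eta>' > 0" for \<eta>'
      using V_upper_dini[OF s0 N(2) that] s0 s by simp
    then have "eventually (\<lambda>u. (V u - \<epsilon>) * weight t1 u - (V s - \<epsilon>) * weight t1 s
        \<le> (dini_bound s * weight t1 s + (V s - \<epsilon>) * (\<kappa> * \<alpha> s * weight t1 s) + \<eta>) * (u - s)) (at_right s)"
      by (rule upper_dini_mult[OF weight_has_real_derivative[OF s0] weight_pos _ \<eta>])
    then show "eventually (\<lambda>u. (V u - \<epsilon>) * weight t1 u - (V s - \<epsilon>) * weight t1 s \<le> \<eta> * (u - s))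
        (at_right s)"
      using eventually_at_right_less[of s]
    proof eventually_elim
      case (elim u)
      have "(dini_bound s * weight t1 s + (V s - \<epsilon>) * (\<kappa> * \<alpha> s * weight t1 s)) * (u - s) \<le> 0"
        using rate elim(2) by (intro mult_nonpos_nonneg) auto
      then show ?case
        using elim(1) by (simp add: distrib_right)
    qed
  qed
  then show ?thesis
    by (simp add: weight_def)
qed

lemma V_eventually_le:
  assumes \<epsilon>: "\<epsilon> > 0"
  shows "eventually (\<lambda>T. V T \<le> 2 * \<epsilon>) at_top"
proof -
  obtain t0 where t0: "\<And>t. t \<ge> t0 \<Longrightarrow> dini_bound t \<le> - \<kappa> * \<alpha> t * (V t - \<epsilon>)"
    using eventually_dini_bound_le[OF \<epsilon>] unfolding eventually_at_top_linorder by blast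
  define t1 where "t1 = max t0 1"
  have t1: "t1 > 0" "\<And>t. t1 \<le> t \<Longrightarrow> dini_bound t \<le> - \<kappa> * \<alpha> t * (V t - \<epsilon>)"
    using t0 by (auto simp: t1_def)
  define Z where "Z = max 1 (\<bar>V t1 - \<epsilon>\<bar> / \<epsilon>)"
  have Z: "Z > 0" "V t1 - \<epsilon> \<le> \<epsilon> * Z"
    using \<epsilon> by (auto simp: Z_def max_def field_simps)
  \<comment> \<open>the weight becomes arbitrarily large because \<open>\<alpha>\<close> is not integrable\<close>
  have "eventually (\<lambda>T. integral {0..t1} \<alpha> + ln Z / \<kappa> \<le> integral {0..T} \<alpha>) at_top"
    using \<alpha>_integral_unbounded unfolding filterlim_at_top by blast
  moreover have "eventually (\<lambda>T. t1 \<le> T) at_top"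
    by (rule eventually_ge_at_top)
  ultimately show ?thesis
  proof eventually_elim
    case (elim T)
    have "ln Z \<le> \<kappa> * (integral {0..T} \<alpha> - integral {0..t1} \<alpha>)"
      using elim \<kappa>_pos by (simp add: field_simps)
    then have "Z \<le> weight t1 T"
      using Z(1) unfolding weight_def by (metis exp_le_cancel_iff exp_ln)
    have "(V T - \<epsilon>) * weight t1 T \<le> V t1 - \<epsilon>"
      by (rule weighted_V_nonincreasing[OF t1(1) elim(2) t1(2)])
    also have "\<dots> \<le> \<epsilon> * weight t1 T"
      using Z(2) \<open>Z \<le> weight t1 T\<close> \<epsilon> by (meson mult_left_mono less_imp_le order_trans)
    finally show "V T \<le> 2 * \<epsilon>"
      using weight_pos[of t1 T] by simp
  qed
qed

lemma z_tendsto: "(z \<longlongrightarrow> xd) at_top"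
proof -
  have "eventually (\<lambda>t. \<alpha> t > 0) at_top"
    using \<alpha>_pos unfolding eventually_at_top_linorder by blast
  then have "filterlim \<alpha> (at_right 0) at_top"
    by (rule tendsto_imp_filterlim_at_right[OF \<alpha>_tendsto_0])
  then show ?thesis
    unfolding z_def[abs_def] by (rule filterlim_compose[OF reg_sol_tendsto])
qed

lemma norm_e_tendsto: "((\<lambda>t. norm (e t)) \<longlongrightarrow> 0) at_top"
proof (rule order_tendstoI)
  fix r :: real assume r: "0 < r"
  have "eventually (\<lambda>t. V t \<le> 2 * (lam * r\<^sup>2 / 4)) at_top"
    using lam_pos r by (intro V_eventually_le) simp
  then show "eventually (\<lambda>t. norm (e t) < r) at_top"
  proof eventually_elim
    case (elim t)
    have "lam * (norm (e t))\<^sup>2 \<le> V t"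
      using A_coercive[of "e t"] by (simp add: V_def energy_def)
    also have "\<dots> \<le> lam * r\<^sup>2 / 2"
      using elim by simp
    also have "\<dots> < lam * r\<^sup>2"
      using lam_pos r by simp
    finally have "(norm (e t))\<^sup>2 < r\<^sup>2"
      using lam_pos by simp
    then show ?case
      using r by (simp add: power2_less_imp_less)
  qed
qed (auto intro: always_eventually less_le_trans[OF _ norm_ge_zero])

lemma x_tendsto: "((\<lambda>t. norm (x t - xd)) \<longlongrightarrow> 0) at_top"
proof (rule tendsto_sandwich[of "\<lambda>_. 0" _ _ "\<lambda>t. norm (e t) + norm (z t - xd)"])
  show "eventually (\<lambda>t. norm (x t - xd) \<le> norm (e t) + norm (z t - xd)) at_top"
    using norm_triangle_ineq[of "e t" "z t - xd" for t] by (simp add: e_def)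
  have "((\<lambda>t. z t - xd) \<longlongrightarrow> 0) at_top"
    using tendsto_diff[OF z_tendsto tendsto_const[of xd]] by simp
  then show "((\<lambda>t. norm (e t) + norm (z t - xd)) \<longlongrightarrow> 0) at_top"
    using tendsto_add[OF norm_e_tendsto tendsto_norm_zero] by simp
qed auto

end

theorem theorem3p4:
  fixes A F :: "'a::{real_inner,complete_space} \<Rightarrow> 'a"
    and C :: "'a set"
    and lam L_A L_F :: real
    and \<alpha> \<alpha>' \<mu> :: "real \<Rightarrow> real"
    and x :: "real \<Rightarrow> 'a"
    and x0 u_dag :: 'a
  assumes C: "C \<noteq> {}" "closed C" "convex C"
    and A1: "lam > 0" "strongly_monotone lam A" "L_A-lipschitz_on UNIV A"
      "L_F-lipschitz_on UNIV F" "seq_weak_weak_cont A" "seq_weak_weak_cont F"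
    and A2: "monotone_couple A F"
    and A3: "Sol A F C \<noteq> {}" "convex (A ` Sol A F C)"
    and A_lin: "linear A" and A_sa: "\<forall>u v. A u \<bullet> v = u \<bullet> A v"
    and \<alpha>_pos: "\<forall>t\<ge>0. \<alpha> t > 0"
    and \<alpha>_C1: "\<forall>t\<ge>0. (\<alpha> has_real_derivative \<alpha>' t) (at t within {0..})"
      "continuous_on {0..} \<alpha>'"
    and \<mu>_pos: "\<forall>t\<ge>0. \<mu> t > 0" and \<mu>_cont: "continuous_on {0..} \<mu>"
    and lim1: "(\<alpha> \<longlongrightarrow> 0) at_top"
    and lim2: "filterlim (\<lambda>t. \<alpha> t * \<mu> t) at_top at_top"
    and lim3: "((\<lambda>t. \<alpha>' t / (\<alpha> t)\<^sup>2) \<longlongrightarrow> 0) at_top"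
    and int_inf: "filterlim (\<lambda>T. integral {0..T} \<alpha>) at_top at_top"
    and sol: "strong_global_solution
               (\<lambda>t y. metric_proj C ((F y + \<alpha> t *\<^sub>R y) - \<mu> t *\<^sub>R A y) - (F y + \<alpha> t *\<^sub>R y))
               x0 x"
    and u_dag: "u_dag \<in> A ` Sol A F C"
      "\<forall>v\<in>A ` Sol A F C. inv A u_dag \<bullet> (v - u_dag) \<ge> 0"
  shows "((\<lambda>t. norm (x t - inv A u_dag)) \<longlongrightarrow> 0) at_top"
proof -
  obtain s where s: "s \<in> Sol A F C" "u_dag = A s"
    using u_dag(1) by blast
  have "inv A u_dag = s"
    using strongly_monotone_imp_inj[OF A1(1,2)] s(2) by (simp add: inv_f_f)
  interpret tikhonov_flow C A F lam L_A L_F "inv A u_dag" \<alpha> \<alpha>' \<mu> x x0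
    by unfold_locales
      (use C A1 A2 A_sa linear_add[OF A_lin] linear_scale[OF A_lin] s u_dag(2) \<open>inv A u_dag = s\<close>
        \<alpha>_pos \<alpha>_C1 \<mu>_pos lim1 lim2 lim3 int_inf sol in auto)
  show ?thesis
    by (rule x_tendsto)
qed

end
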